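(* Consider the equation, for an unknown formal power series $U(T,m,\epsilon)$ in $T$, $$Q(im)U(qT,m,\epsilon)=T^{d_{D_1}}R_{D_1}(im)U(q^{\frac{d_{D_1}}{k_1}+1}T,m,\epsilon)+T^{d_{D_2}}R_{D_2}(im)U(q^{\frac{d_{D_2}}{k_2}+1}T,m,\epsilon)$$ $$+\sum_{\ell=1}^{D-1}\epsilon^{\Delta_\ell-d_\ell}T^{d_\ell}\,\sigma_{q,T}^{\delta_\ell}\Big(\frac{1}{(2\pi)^{1/2}}\int_{-\infty}^{+\infty}C_\ell(T,m-m_1,\epsilon)R_\ell(im_1)U(T,m_1,\epsilon)\,dm_1\Big)+\hat F(qT,m,\epsilon).$$ There exists a unique formal power series $\hat U(T,m,\epsilon)=\sum_{n\ge0}U_n(m,\epsilon)T^n$ solving this equation, and its coefficients $U_n(m,\epsilon)$ belong to $E_{(\beta,\mu)}$ (as functions of $m$) and depend holomorphically on $\epsilon\in D(0,\epsilon_0)$.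
   Context: Fix a real $q>1$, integers $1\le k_1<k_2$, and $\kappa$ with $1/\kappa=1/k_1-1/k_2$. Fix integers $D,D_1,D_2\ge3$, positive integers $d_{D_1},d_{D_2}$ and, for $1\le\ell\le D-1$, integers $d_\ell\ge1,\delta_\ell\ge1,\Delta_\ell\ge0$ with $\delta_1=1$, $\delta_\ell<\delta_{\ell+1}$ ($1\le \ell\le D-2$), and for all $1\le\ell\le D-1$: $\Delta_\ell\ge d_\ell$, $d_\ell/k_2+1\ge\delta_\ell$, $(d_{D_1}-1)/\kappa-d_\ell/k_2\ge\delta_\ell-1$, $(d_{D_2}-1)/k_2\ge\delta_\ell-1$; moreover $k_1d_{D_2}>k_2d_{D_1}$. Let $Q,R_{D_1},R_{D_2},R_1,\dots,R_{D-1}\in\mathbb{C}[X]$ with $\deg R_{D_1}=\deg R_{D_2}$, $\deg Q\ge\deg R_{D_j}\ge\deg R_\ell$, $Q(im)\neq0$ and $R_{D_j}(im)\ne0$ for all $m\in\mathbb{R}$, $j=1,2$. Fix $\beta>0$ and $\mu>\deg(R_{D_j})+1$. $E_{(\beta,\mu)}$ is the Banach space of continuous $h:\mathbb{R}\to\mathbb{C}$ with $\|h\|_{(\beta,\mu)}=\sup_m(1+|m|)^\mu e^{\beta|m|}|h(m)|<\infty$. For $\gamma\in\mathbb{R}$, $\sigma_{q,T}^{\gamma}$ is the operator $g(T)\mapsto g(q^\gamma T)$. Let $\epsilon_0>0$. For $n\ge0$, $F_n(m,\epsilon)$ belongs to $E_{(\beta,\mu)}$ in $m$ and depends holomorphically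 on $\epsilon\in D(0,\epsilon_0)$, and there are $C_F,T_0>0$ with $\|F_n\|_{(\beta,\mu)}\le C_F T_0^{-n}(q^{1/k_1})^{n(n-1)/2}$ for all $n\ge0$; $\hat F(T,m,\epsilon)=\sum_{n\ge0}F_n(m,\epsilon)T^n$. For $1\le\ell\le D-1$, $C_\ell(T,m,\epsilon)=\sum_{j=0}^{p_1}C_{\ell,j}(m,\epsilon)T^j$ with $C_{\ell,j}\in E_{(\beta,\mu)}$ in $m$, holomorphic in $\epsilon\in D(0,\epsilon_0)$. *)

theory Defs
  imports "HOL-Analysis.Analysis" "HOL-Computational_Algebra.Polynomial"
begin

definition E_space :: "real \<Rightarrow> real \<Rightarrow> (real \<Rightarrow> complex) set" where
  "E_space \<beta> \<mu> = {h. continuous_on UNIV h \<and>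
     bdd_above (range (\<lambda>m. (1 + \<bar>m\<bar>) powr \<mu> * exp (\<beta> * \<bar>m\<bar>) * cmod (h m)))}"

definition normE :: "real \<Rightarrow> real \<Rightarrow> (real \<Rightarrow> complex) \<Rightarrow> real" where
  "normE \<beta> \<mu> h = (SUP m. (1 + \<bar>m\<bar>) powr \<mu> * exp (\<beta> * \<bar>m\<bar>) * cmod (h m))"

definition holo_E :: "real \<Rightarrow> real \<Rightarrow> complex set \<Rightarrow> (complex \<Rightarrow> real \<Rightarrow> complex) \<Rightarrow> bool" where
  "holo_E \<beta> \<mu> S f \<longleftrightarrow>
     (\<forall>\<epsilon>\<in>S. f \<epsilon> \<in> E_space \<beta> \<mu>) \<and>
     (\<forall>\<epsilon>\<in>S. \<exists>g\<in>E_space \<beta> \<mu>.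
        ((\<lambda>h. normE \<beta> \<mu> (\<lambda>m. (f (\<epsilon> + h) m - f \<epsilon> m) / h - g m)) \<longlongrightarrow> 0) (at 0))"

text \<open>Formal power series in T whose coefficients are functions of m (epsilon fixed):
  A n m is the coefficient of T^n.\<close>

type_synonym fser = "nat \<Rightarrow> real \<Rightarrow> complex"

definition fs_shift :: "nat \<Rightarrow> fser \<Rightarrow> fser" where
  "fs_shift d A n m = (if d \<le> n then A (n - d) m else 0)"

text \<open>Dilation A(T) |-> A(c T); in particular sigma_{q,T}^gamma is fs_dil (q powr gamma).\<close>
definition fs_dil :: "real \<Rightarrow> fser \<Rightarrow> fser" where
  "fs_dil c A n m = complex_of_real (c ^ n) * A n m"

definition fs_polymul :: "complex poly \<Rightarrow> fser \<Rightarrow> fser" where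
  "fs_polymul P A n m = poly P (\<i> * complex_of_real m) * A n m"

text \<open>(2 pi)^(-1/2) * integral over R of C(T, m - m1) R(i m1) A(T, m1) dm1,
  computed coefficientwise in T (Cauchy product in T).\<close>
definition fs_conv :: "fser \<Rightarrow> complex poly \<Rightarrow> fser \<Rightarrow> fser" where
  "fs_conv C R A n m = complex_of_real (1 / sqrt (2 * pi)) *
     integral UNIV (\<lambda>m1. \<Sum>j\<le>n. C j (m - m1) * poly R (\<i> * complex_of_real m1) * A (n - j) m1)"

text \<open>The equation (coefficientwise in T), for all epsilon in D(0,eps0).
  C l j m eps is C_{l,j}(m,eps); the polynomial C_l(T) has degree \<le> p1 in T.\<close>

definition solves_eq ::
  "real \<Rightarrow> nat \<Rightarrow> nat \<Rightarrow> nat \<Rightarrow> nat \<Rightarrow> nat \<Rightarrow> complex poly \<Rightarrow> complex poly \<Rightarrow> complex poly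
   \<Rightarrow> (nat \<Rightarrow> complex poly) \<Rightarrow> (nat \<Rightarrow> nat) \<Rightarrow> (nat \<Rightarrow> nat) \<Rightarrow> (nat \<Rightarrow> nat)
   \<Rightarrow> (nat \<Rightarrow> nat \<Rightarrow> real \<Rightarrow> complex \<Rightarrow> complex) \<Rightarrow> nat
   \<Rightarrow> (nat \<Rightarrow> real \<Rightarrow> complex \<Rightarrow> complex) \<Rightarrow> real
   \<Rightarrow> (nat \<Rightarrow> real \<Rightarrow> complex \<Rightarrow> complex) \<Rightarrow> bool" where
  "solves_eq q k1 k2 D dD1 dD2 Q RD1 RD2 R d \<delta> \<Delta> C p1 F \<epsilon>0 U \<longleftrightarrow>
    (\<forall>\<epsilon>\<in>ball 0 \<epsilon>0. \<forall>n m.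
      fs_polymul Q (fs_dil q (\<lambda>n m. U n m \<epsilon>)) n m =
        fs_shift dD1 (fs_polymul RD1 (fs_dil (q powr (real dD1 / real k1 + 1)) (\<lambda>n m. U n m \<epsilon>))) n m
      + fs_shift dD2 (fs_polymul RD2 (fs_dil (q powr (real dD2 / real k2 + 1)) (\<lambda>n m. U n m \<epsilon>))) n m
      + (\<Sum>l\<in>{1..D-1}. \<epsilon> ^ (\<Delta> l - d l) *
           fs_shift (d l) (fs_dil (q powr real (\<delta> l))
             (fs_conv (\<lambda>j m. if j \<le> p1 then C l j m \<epsilon> else 0) (R l) (\<lambda>n m. U n m \<epsilon>))) n m)
      + fs_dil q (\<lambda>n m. F n m \<epsilon>) n m)"

end

theory Submission
  imports Defs
begin

text \<open>Comparing coefficients of \<open>T^n\<close>, the equation reads \<open>Q(im) q^n U\<^sub>n = \<Phi>\<^sub>n\<close>, where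
  \<open>\<Phi>\<^sub>n\<close> involves \<open>F\<^sub>n\<close> and only the coefficients \<open>U\<^sub>k\<close> with \<open>k < n\<close>, since every
  term containing the unknown carries a factor \<open>T^d\<close> with \<open>d \<ge> 1\<close>. As \<open>Q(im) \<noteq> 0\<close>, this
  recursion determines the \<open>U\<^sub>n\<close> uniquely. Holomorphic dependence on \<open>\<epsilon>\<close> with values in
  \<open>E_(\<beta>,\<mu>)\<close> then follows by strong induction on \<open>n\<close>: it is preserved by sums, by
  multiplication with bounded continuous functions of \<open>m\<close> such as \<open>R(im)/Q(im)\<close>, by
  multiplication with holomorphic scalars such as \<open>\<epsilon>^k\<close>, and by the convolution divided by
  \<open>Q(im)\<close>, which is a bounded bilinear map on \<open>E_(\<beta>,\<mu>)\<close> because \<open>\<mu> > deg R + 1\<close> and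
  \<open>|Q(im)| \<ge> c (1 + |m|)^deg R\<close>.\<close>

definition E_weight :: "real \<Rightarrow> real \<Rightarrow> real \<Rightarrow> real" where
  "E_weight \<beta> \<mu> m = (1 + \<bar>m\<bar>) powr \<mu> * exp (\<beta> * \<bar>m\<bar>)"

lemma E_weight_pos: "E_weight \<beta> \<mu> m > 0"
  unfolding E_weight_def by (simp add: add_pos_nonneg)

lemma E_weight_ge_1:
  assumes "\<beta> \<ge> 0" "\<mu> \<ge> 0"
  shows "E_weight \<beta> \<mu> m \<ge> 1"
proof -
  have "1 \<le> (1 + \<bar>m\<bar>) powr \<mu>" using assms by (intro ge_one_powr_ge_zero) auto
  moreover have "1 \<le> exp (\<beta> * \<bar>m\<bar>)" using assms by simp
  ultimately show ?thesis
    unfolding E_weight_def using mult_mono[of 1 "(1 + \<bar>m\<bar>) powr \<mu>" 1 "exp (\<beta> * \<bar>m\<bar>)"] by simp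
qed

lemma inverse_E_weight: "inverse (E_weight \<beta> \<mu> m) = (1 + \<bar>m\<bar>) powr (-\<mu>) * exp (- \<beta> * \<bar>m\<bar>)"
  unfolding E_weight_def by (simp add: powr_minus exp_minus)

lemma mem_E_space_iff:
  "h \<in> E_space \<beta> \<mu> \<longleftrightarrow> continuous_on UNIV h \<and> (\<exists>B. \<forall>m. E_weight \<beta> \<mu> m * cmod (h m) \<le> B)"
  unfolding E_space_def E_weight_def bdd_above_def by auto

lemma E_spaceI: "continuous_on UNIV h \<Longrightarrow> (\<And>m. E_weight \<beta> \<mu> m * cmod (h m) \<le> B) \<Longrightarrow> h \<in> E_space \<beta> \<mu>"
  unfolding mem_E_space_iff by blast

lemma E_space_continuous: "h \<in> E_space \<beta> \<mu> \<Longrightarrow> continuous_on UNIV h"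
  unfolding mem_E_space_iff by blast

lemma normE_upper: "h \<in> E_space \<beta> \<mu> \<Longrightarrow> E_weight \<beta> \<mu> m * cmod (h m) \<le> normE \<beta> \<mu> h"
  unfolding normE_def E_space_def E_weight_def by (auto intro!: cSUP_upper)

lemma normE_least: "(\<And>m. E_weight \<beta> \<mu> m * cmod (h m) \<le> B) \<Longrightarrow> normE \<beta> \<mu> h \<le> B"
  unfolding normE_def E_weight_def by (auto intro!: cSUP_least)

lemma normE_nonneg: "h \<in> E_space \<beta> \<mu> \<Longrightarrow> 0 \<le> normE \<beta> \<mu> h"
proof -
  assume "h \<in> E_space \<beta> \<mu>"
  moreover have "0 \<le> E_weight \<beta> \<mu> 0 * cmod (h 0)" using E_weight_pos[of \<beta> \<mu> 0] by simp
  ultimately show ?thesis using normE_upper[of h \<beta> \<mu> 0] by linarith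
qed

lemma norm_le_normE_decay:
  assumes "h \<in> E_space \<beta> \<mu>"
  shows "cmod (h m) \<le> normE \<beta> \<mu> h * ((1 + \<bar>m\<bar>) powr (-\<mu>) * exp (- \<beta> * \<bar>m\<bar>))"
proof -
  have "cmod (h m) \<le> normE \<beta> \<mu> h / E_weight \<beta> \<mu> m"
    using normE_upper[OF assms, of m] E_weight_pos[of \<beta> \<mu> m] by (simp add: pos_le_divide_eq mult.commute)
  then show ?thesis by (simp add: divide_inverse inverse_E_weight)
qed

lemma norm_le_normE:
  assumes "h \<in> E_space \<beta> \<mu>" "\<beta> \<ge> 0" "\<mu> \<ge> 0"
  shows "cmod (h m) \<le> normE \<beta> \<mu> h"
proof -
  have "cmod (h m) \<le> E_weight \<beta> \<mu> m * cmod (h m)"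
    using E_weight_ge_1[OF assms(2,3), of m] by (simp add: mult_le_cancel_right1)
  then show ?thesis using normE_upper[OF assms(1), of m] by linarith
qed

lemma norm_le_normE_powr:
  assumes "h \<in> E_space \<beta> \<mu>" "\<beta> \<ge> 0"
  shows "cmod (h m) \<le> normE \<beta> \<mu> h * (1 + \<bar>m\<bar>) powr (-\<mu>)"
proof -
  have "(1 + \<bar>m\<bar>) powr (-\<mu>) * exp (- \<beta> * \<bar>m\<bar>) \<le> (1 + \<bar>m\<bar>) powr (-\<mu>)"
    using assms(2) by (intro mult_left_le) auto
  then show ?thesis
    using norm_le_normE_decay[OF assms(1), of m] normE_nonneg[OF assms(1)]
    by (meson mult_left_mono order_trans)
qed

lemma E_space_zero: "(\<lambda>m. 0) \<in> E_space \<beta> \<mu>"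
  by (rule E_spaceI[where B=0]) auto

lemma normE_zero: "normE \<beta> \<mu> (\<lambda>m. 0) = 0"
  unfolding normE_def by simp

lemma weighted_norm_add_le:
  assumes "a \<in> E_space \<beta> \<mu>" "b \<in> E_space \<beta> \<mu>"
  shows "E_weight \<beta> \<mu> m * cmod (a m + b m) \<le> normE \<beta> \<mu> a + normE \<beta> \<mu> b"
proof -
  have "E_weight \<beta> \<mu> m * cmod (a m + b m) \<le> E_weight \<beta> \<mu> m * cmod (a m) + E_weight \<beta> \<mu> m * cmod (b m)"
    using E_weight_pos[of \<beta> \<mu> m] by (simp add: norm_triangle_ineq flip: distrib_left)
  then show ?thesis using normE_upper[OF assms(1), of m] normE_upper[OF assms(2), of m] by linarith
qed

lemma E_space_add:
  assumes "a \<in> E_space \<beta> \<mu>" "b \<in> E_space \<beta> \<mu>"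
  shows "(\<lambda>m. a m + b m) \<in> E_space \<beta> \<mu>"
  using continuous_on_add[OF E_space_continuous[OF assms(1)] E_space_continuous[OF assms(2)]]
    weighted_norm_add_le[OF assms]
  by (rule E_spaceI)

lemma normE_add_le:
  "a \<in> E_space \<beta> \<mu> \<Longrightarrow> b \<in> E_space \<beta> \<mu> \<Longrightarrow> normE \<beta> \<mu> (\<lambda>m. a m + b m) \<le> normE \<beta> \<mu> a + normE \<beta> \<mu> b"
  by (rule normE_least, rule weighted_norm_add_le)

lemma weighted_norm_mult_le:
  assumes "a \<in> E_space \<beta> \<mu>" "\<And>m. cmod (\<phi> m) \<le> K"
  shows "E_weight \<beta> \<mu> m * cmod (\<phi> m * a m) \<le> K * normE \<beta> \<mu> a"
proof -
  have "E_weight \<beta> \<mu> m * cmod (\<phi> m * a m) = cmod (\<phi> m) * (E_weight \<beta> \<mu> m * cmod (a m))"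
    by (simp add: norm_mult)
  also have "\<dots> \<le> K * normE \<beta> \<mu> a"
    using assms(2)[of m] normE_upper[OF assms(1), of m] E_weight_pos[of \<beta> \<mu> m] order_trans[OF norm_ge_zero assms(2)]
    by (intro mult_mono) simp_all
  finally show ?thesis .
qed

lemma E_space_mult:
  assumes "a \<in> E_space \<beta> \<mu>" "continuous_on UNIV \<phi>" "\<And>m. cmod (\<phi> m) \<le> K"
  shows "(\<lambda>m. \<phi> m * a m) \<in> E_space \<beta> \<mu>"
  using continuous_on_mult[OF assms(2) E_space_continuous[OF assms(1)]] weighted_norm_mult_le[OF assms(1,3)]
  by (rule E_spaceI)

lemma normE_mult_le:
  "a \<in> E_space \<beta> \<mu> \<Longrightarrow> (\<And>m. cmod (\<phi> m) \<le> K) \<Longrightarrow> normE \<beta> \<mu> (\<lambda>m. \<phi> m * a m) \<le> K * normE \<beta> \<mu> a"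
  by (rule normE_least, rule weighted_norm_mult_le)

lemma E_space_scale: "a \<in> E_space \<beta> \<mu> \<Longrightarrow> (\<lambda>m. c * a m) \<in> E_space \<beta> \<mu>"
  by (rule E_space_mult[where K="cmod c"]) auto

lemma normE_scale_le: "a \<in> E_space \<beta> \<mu> \<Longrightarrow> normE \<beta> \<mu> (\<lambda>m. c * a m) \<le> cmod c * normE \<beta> \<mu> a"
  by (rule normE_mult_le) auto

lemma E_space_diff: "a \<in> E_space \<beta> \<mu> \<Longrightarrow> b \<in> E_space \<beta> \<mu> \<Longrightarrow> (\<lambda>m. a m - b m) \<in> E_space \<beta> \<mu>"
  using E_space_add[OF _ E_space_scale[of b \<beta> \<mu> "-1"], of a] by simp

lemma normE_le_add_diff:
  assumes "a \<in> E_space \<beta> \<mu>" "b \<in> E_space \<beta> \<mu>"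
  shows "normE \<beta> \<mu> b \<le> normE \<beta> \<mu> a + normE \<beta> \<mu> (\<lambda>m. b m - a m)"
  using normE_add_le[OF assms(1) E_space_diff[OF assms(2,1)]] by simp


definition diff_quot_error ::
  "(complex \<Rightarrow> real \<Rightarrow> complex) \<Rightarrow> (real \<Rightarrow> complex) \<Rightarrow> complex \<Rightarrow> complex \<Rightarrow> real \<Rightarrow> complex" where
  "diff_quot_error f f' \<epsilon> h = (\<lambda>m. (f (\<epsilon> + h) m - f \<epsilon> m) / h - f' m)"

lemma holo_E_iff:
  "holo_E \<beta> \<mu> S f \<longleftrightarrow> (\<forall>\<epsilon>\<in>S. f \<epsilon> \<in> E_space \<beta> \<mu>) \<and>
     (\<forall>\<epsilon>\<in>S. \<exists>f'\<in>E_space \<beta> \<mu>. ((\<lambda>h. normE \<beta> \<mu> (diff_quot_error f f' \<epsilon> h)) \<longlongrightarrow> 0) (at 0))"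
  unfolding holo_E_def diff_quot_error_def ..

lemma holo_E_E_space: "holo_E \<beta> \<mu> S f \<Longrightarrow> \<epsilon> \<in> S \<Longrightarrow> f \<epsilon> \<in> E_space \<beta> \<mu>"
  unfolding holo_E_iff by blast

lemma holo_E_derivativeE:
  assumes "holo_E \<beta> \<mu> S f" "\<epsilon> \<in> S"
  obtains f' where "f' \<in> E_space \<beta> \<mu>" "((\<lambda>h. normE \<beta> \<mu> (diff_quot_error f f' \<epsilon> h)) \<longlongrightarrow> 0) (at 0)"
  using assms unfolding holo_E_iff by blast

lemma holo_EI:
  assumes "\<And>\<epsilon>. \<epsilon> \<in> S \<Longrightarrow> f \<epsilon> \<in> E_space \<beta> \<mu>"
    and "\<And>\<epsilon>. \<epsilon> \<in> S \<Longrightarrow> \<exists>f'\<in>E_space \<beta> \<mu>. ((\<lambda>h. normE \<beta> \<mu> (diff_quot_error f f' \<epsilon> h)) \<longlongrightarrow> 0) (at 0)"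
  shows "holo_E \<beta> \<mu> S f"
  using assms unfolding holo_E_iff by blast

lemma diff_quot_error_E_space:
  assumes "f \<epsilon> \<in> E_space \<beta> \<mu>" "f (\<epsilon> + h) \<in> E_space \<beta> \<mu>" "f' \<in> E_space \<beta> \<mu>"
  shows "diff_quot_error f f' \<epsilon> h \<in> E_space \<beta> \<mu>"
  using E_space_diff[OF E_space_scale[OF E_space_diff[OF assms(2,1)], of "1 / h"] assms(3)]
  by (simp add: diff_quot_error_def)

lemma eventually_at_0_in_open:
  assumes "open S" "\<epsilon> \<in> S"
  shows "\<forall>\<^sub>F h in at (0::complex). h \<noteq> 0 \<and> \<epsilon> + h \<in> S"
proof -
  have "((\<lambda>h. \<epsilon> + h) \<longlongrightarrow> \<epsilon>) (at (0::complex))"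
    using tendsto_add[OF tendsto_const tendsto_ident_at, of \<epsilon> 0 UNIV] by simp
  then have "\<forall>\<^sub>F h in at (0::complex). \<epsilon> + h \<in> S"
    using assms unfolding tendsto_def by simp
  then show ?thesis by (simp add: eventually_conj_iff eventually_at_filter)
qed

lemma diff_quot_error_tendsto_0:
  assumes S: "open S" "\<epsilon> \<in> S" and f: "\<And>\<epsilon>. \<epsilon> \<in> S \<Longrightarrow> f \<epsilon> \<in> E_space \<beta> \<mu>" and f': "f' \<in> E_space \<beta> \<mu>"
    and e: "(e \<longlongrightarrow> 0) (at 0)"
    and bound: "\<And>h. h \<noteq> 0 \<Longrightarrow> \<epsilon> + h \<in> S \<Longrightarrow> normE \<beta> \<mu> (diff_quot_error f f' \<epsilon> h) \<le> e h"
  shows "((\<lambda>h. normE \<beta> \<mu> (diff_quot_error f f' \<epsilon> h)) \<longlongrightarrow> 0) (at 0)"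
proof (rule Lim_null_comparison[OF _ e])
  show "\<forall>\<^sub>F h in at 0. norm (normE \<beta> \<mu> (diff_quot_error f f' \<epsilon> h)) \<le> e h"
    using eventually_at_0_in_open[OF S]
  proof eventually_elim
    case (elim h)
    have "diff_quot_error f f' \<epsilon> h \<in> E_space \<beta> \<mu>"
      using f S(2) elim f' by (intro diff_quot_error_E_space) auto
    then show ?case using normE_nonneg bound elim by simp
  qed
qed

lemma holo_E_continuous:
  assumes f: "holo_E \<beta> \<mu> S f" and S: "open S" "\<epsilon> \<in> S"
  shows "((\<lambda>h. normE \<beta> \<mu> (\<lambda>m. f (\<epsilon> + h) m - f \<epsilon> m)) \<longlongrightarrow> 0) (at 0)"
proof -
  obtain f' where f': "f' \<in> E_space \<beta> \<mu>"
    and lim: "((\<lambda>h. normE \<beta> \<mu> (diff_quot_error f f' \<epsilon> h)) \<longlongrightarrow> 0) (at 0)"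
    using holo_E_derivativeE[OF f S(2)] .
  have "\<forall>\<^sub>F h in at (0::complex). norm (normE \<beta> \<mu> (\<lambda>m. f (\<epsilon> + h) m - f \<epsilon> m))
     \<le> cmod h * (normE \<beta> \<mu> (diff_quot_error f f' \<epsilon> h) + normE \<beta> \<mu> f')"
    using eventually_at_0_in_open[OF S]
  proof eventually_elim
    case (elim h)
    have f0: "f \<epsilon> \<in> E_space \<beta> \<mu>" and f1: "f (\<epsilon> + h) \<in> E_space \<beta> \<mu>"
      using holo_E_E_space[OF f] S elim by auto
    have err: "diff_quot_error f f' \<epsilon> h \<in> E_space \<beta> \<mu>"
      by (rule diff_quot_error_E_space[OF f0 f1 f'])
    have "(\<lambda>m. f (\<epsilon> + h) m - f \<epsilon> m) = (\<lambda>m. h * (diff_quot_error f f' \<epsilon> h m + f' m))"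
      using elim by (auto simp: diff_quot_error_def field_simps)
    then have "normE \<beta> \<mu> (\<lambda>m. f (\<epsilon> + h) m - f \<epsilon> m) \<le> cmod h * normE \<beta> \<mu> (\<lambda>m. diff_quot_error f f' \<epsilon> h m + f' m)"
      using normE_scale_le[OF E_space_add[OF err f']] by simp
    also have "\<dots> \<le> cmod h * (normE \<beta> \<mu> (diff_quot_error f f' \<epsilon> h) + normE \<beta> \<mu> f')"
      by (rule mult_left_mono[OF normE_add_le[OF err f']]) simp
    finally show ?case using normE_nonneg[OF E_space_diff[OF f1 f0]] by simp
  qed
  moreover have "((\<lambda>h. cmod h * (normE \<beta> \<mu> (diff_quot_error f f' \<epsilon> h) + normE \<beta> \<mu> f')) \<longlongrightarrow> 0) (at 0)"
    using tendsto_mult[OF tendsto_norm[OF tendsto_ident_at] tendsto_add[OF lim tendsto_const]] by simp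
  ultimately show ?thesis by (rule Lim_null_comparison)
qed

lemma holo_E_cong:
  assumes f: "holo_E \<beta> \<mu> S f" and S: "open S" and eq: "\<And>\<epsilon> m. \<epsilon> \<in> S \<Longrightarrow> f \<epsilon> m = g \<epsilon> m"
  shows "holo_E \<beta> \<mu> S g"
proof (rule holo_EI)
  fix \<epsilon> assume e: "\<epsilon> \<in> S"
  have fg: "f \<epsilon>' = g \<epsilon>'" if "\<epsilon>' \<in> S" for \<epsilon>' using eq[OF that] by blast
  show "g \<epsilon> \<in> E_space \<beta> \<mu>" using holo_E_E_space[OF f e] fg[OF e] by simp
  obtain f' where f': "f' \<in> E_space \<beta> \<mu>"
    and lim: "((\<lambda>h. normE \<beta> \<mu> (diff_quot_error f f' \<epsilon> h)) \<longlongrightarrow> 0) (at 0)"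
    using holo_E_derivativeE[OF f e] .
  have "\<forall>\<^sub>F h in at 0. normE \<beta> \<mu> (diff_quot_error f f' \<epsilon> h) = normE \<beta> \<mu> (diff_quot_error g f' \<epsilon> h)"
    using eventually_at_0_in_open[OF S e] by eventually_elim (simp add: diff_quot_error_def fg e)
  then have "((\<lambda>h. normE \<beta> \<mu> (diff_quot_error g f' \<epsilon> h)) \<longlongrightarrow> 0) (at 0)"
    using tendsto_cong lim by fastforce
  with f' show "\<exists>g'\<in>E_space \<beta> \<mu>. ((\<lambda>h. normE \<beta> \<mu> (diff_quot_error g g' \<epsilon> h)) \<longlongrightarrow> 0) (at 0)"
    by blast
qed

lemma holo_E_zero: "holo_E \<beta> \<mu> S (\<lambda>\<epsilon> m. 0)"
proof (rule holo_EI)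
  show "(\<lambda>m. 0) \<in> E_space \<beta> \<mu>" for \<epsilon> :: complex by (rule E_space_zero)
  have "diff_quot_error (\<lambda>\<epsilon> m. 0) (\<lambda>m. 0) \<epsilon> h = (\<lambda>m. 0)" for \<epsilon> h :: complex
    by (simp add: diff_quot_error_def)
  then show "\<exists>f'\<in>E_space \<beta> \<mu>. ((\<lambda>h. normE \<beta> \<mu> (diff_quot_error (\<lambda>\<epsilon> m. 0) f' \<epsilon> h)) \<longlongrightarrow> 0) (at 0)"
    for \<epsilon> :: complex
    by (intro bexI[OF _ E_space_zero]) (simp add: normE_zero)
qed

lemma holo_E_add:
  assumes f: "holo_E \<beta> \<mu> S f" and g: "holo_E \<beta> \<mu> S g" and S: "open S"
  shows "holo_E \<beta> \<mu> S (\<lambda>\<epsilon> m. f \<epsilon> m + g \<epsilon> m)"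
proof (rule holo_EI)
  fix \<epsilon> assume e: "\<epsilon> \<in> S"
  have fg: "(\<lambda>m. f \<epsilon>' m + g \<epsilon>' m) \<in> E_space \<beta> \<mu>" if "\<epsilon>' \<in> S" for \<epsilon>'
    using E_space_add[OF holo_E_E_space[OF f that] holo_E_E_space[OF g that]] .
  then show "(\<lambda>m. f \<epsilon> m + g \<epsilon> m) \<in> E_space \<beta> \<mu>" using e .
  obtain f' where f': "f' \<in> E_space \<beta> \<mu>"
    and limf: "((\<lambda>h. normE \<beta> \<mu> (diff_quot_error f f' \<epsilon> h)) \<longlongrightarrow> 0) (at 0)"
    using holo_E_derivativeE[OF f e] .
  obtain g' where g': "g' \<in> E_space \<beta> \<mu>"
    and limg: "((\<lambda>h. normE \<beta> \<mu> (diff_quot_error g g' \<epsilon> h)) \<longlongrightarrow> 0) (at 0)"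
    using holo_E_derivativeE[OF g e] .
  have "((\<lambda>h. normE \<beta> \<mu> (diff_quot_error (\<lambda>\<epsilon> m. f \<epsilon> m + g \<epsilon> m) (\<lambda>m. f' m + g' m) \<epsilon> h)) \<longlongrightarrow> 0) (at 0)"
  proof (rule diff_quot_error_tendsto_0[OF S e fg E_space_add[OF f' g']])
    show "((\<lambda>h. normE \<beta> \<mu> (diff_quot_error f f' \<epsilon> h) + normE \<beta> \<mu> (diff_quot_error g g' \<epsilon> h)) \<longlongrightarrow> 0) (at 0)"
      using tendsto_add[OF limf limg] by simp
    fix h :: complex assume h: "h \<noteq> 0" "\<epsilon> + h \<in> S"
    have "diff_quot_error (\<lambda>\<epsilon> m. f \<epsilon> m + g \<epsilon> m) (\<lambda>m. f' m + g' m) \<epsilon> h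
        = (\<lambda>m. diff_quot_error f f' \<epsilon> h m + diff_quot_error g g' \<epsilon> h m)"
      using h by (simp add: diff_quot_error_def fun_eq_iff field_simps)
    then show "normE \<beta> \<mu> (diff_quot_error (\<lambda>\<epsilon> m. f \<epsilon> m + g \<epsilon> m) (\<lambda>m. f' m + g' m) \<epsilon> h)
        \<le> normE \<beta> \<mu> (diff_quot_error f f' \<epsilon> h) + normE \<beta> \<mu> (diff_quot_error g g' \<epsilon> h)"
      using h e holo_E_E_space[OF f] holo_E_E_space[OF g] f' g'
      by (simp add: normE_add_le diff_quot_error_E_space)
  qed
  with E_space_add[OF f' g']
  show "\<exists>d\<in>E_space \<beta> \<mu>. ((\<lambda>h. normE \<beta> \<mu> (diff_quot_error (\<lambda>\<epsilon> m. f \<epsilon> m + g \<epsilon> m) d \<epsilon> h)) \<longlongrightarrow> 0) (at 0)"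
    by blast
qed

lemma holo_E_sum:
  assumes "finite I" "\<And>i. i \<in> I \<Longrightarrow> holo_E \<beta> \<mu> S (f i)" "open S"
  shows "holo_E \<beta> \<mu> S (\<lambda>\<epsilon> m. \<Sum>i\<in>I. f i \<epsilon> m)"
  using assms by (induction I rule: finite_induct) (simp_all add: holo_E_zero holo_E_add)


lemma holo_E_mult:
  assumes f: "holo_E \<beta> \<mu> S f" and S: "open S"
    and \<phi>: "continuous_on UNIV \<phi>" "\<And>m. cmod (\<phi> m) \<le> K"
  shows "holo_E \<beta> \<mu> S (\<lambda>\<epsilon> m. \<phi> m * f \<epsilon> m)"
proof (rule holo_EI)
  fix \<epsilon> assume e: "\<epsilon> \<in> S"
  have \<phi>f: "(\<lambda>m. \<phi> m * f \<epsilon>' m) \<in> E_space \<beta> \<mu>" if "\<epsilon>' \<in> S" for \<epsilon>'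
    using E_space_mult[OF holo_E_E_space[OF f that] \<phi>] .
  then show "(\<lambda>m. \<phi> m * f \<epsilon> m) \<in> E_space \<beta> \<mu>" using e .
  obtain f' where f': "f' \<in> E_space \<beta> \<mu>"
    and lim: "((\<lambda>h. normE \<beta> \<mu> (diff_quot_error f f' \<epsilon> h)) \<longlongrightarrow> 0) (at 0)"
    using holo_E_derivativeE[OF f e] .
  have "((\<lambda>h. normE \<beta> \<mu> (diff_quot_error (\<lambda>\<epsilon> m. \<phi> m * f \<epsilon> m) (\<lambda>m. \<phi> m * f' m) \<epsilon> h)) \<longlongrightarrow> 0) (at 0)"
  proof (rule diff_quot_error_tendsto_0[OF S e \<phi>f E_space_mult[OF f' \<phi>]])
    show "((\<lambda>h. K * normE \<beta> \<mu> (diff_quot_error f f' \<epsilon> h)) \<longlongrightarrow> 0) (at 0)"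
      by (rule tendsto_mult_right_zero[OF lim])
    fix h :: complex assume h: "h \<noteq> 0" "\<epsilon> + h \<in> S"
    have "diff_quot_error (\<lambda>\<epsilon> m. \<phi> m * f \<epsilon> m) (\<lambda>m. \<phi> m * f' m) \<epsilon> h
        = (\<lambda>m. \<phi> m * diff_quot_error f f' \<epsilon> h m)"
      using h by (simp add: diff_quot_error_def fun_eq_iff field_simps)
    moreover have "diff_quot_error f f' \<epsilon> h \<in> E_space \<beta> \<mu>"
      using holo_E_E_space[OF f] e h f' by (simp add: diff_quot_error_E_space)
    ultimately show "normE \<beta> \<mu> (diff_quot_error (\<lambda>\<epsilon> m. \<phi> m * f \<epsilon> m) (\<lambda>m. \<phi> m * f' m) \<epsilon> h)
        \<le> K * normE \<beta> \<mu> (diff_quot_error f f' \<epsilon> h)"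
      using normE_mult_le \<phi>(2) by simp
  qed
  with E_space_mult[OF f' \<phi>]
  show "\<exists>d\<in>E_space \<beta> \<mu>. ((\<lambda>h. normE \<beta> \<mu> (diff_quot_error (\<lambda>\<epsilon> m. \<phi> m * f \<epsilon> m) d \<epsilon> h)) \<longlongrightarrow> 0) (at 0)"
    by blast
qed

lemma normE_diff_quot_error_scalar_mult_le:
  fixes p :: "complex \<Rightarrow> complex" and p' :: complex
  assumes f0: "f \<epsilon> \<in> E_space \<beta> \<mu>" and f1: "f (\<epsilon> + h) \<in> E_space \<beta> \<mu>" and f': "f' \<in> E_space \<beta> \<mu>"
    and h: "h \<noteq> 0"
  defines "dp \<equiv> (p (\<epsilon> + h) - p \<epsilon>) / h - p'"
    and "df \<equiv> normE \<beta> \<mu> (\<lambda>m. f (\<epsilon> + h) m - f \<epsilon> m)"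
  shows "normE \<beta> \<mu> (diff_quot_error (\<lambda>\<epsilon> m. p \<epsilon> * f \<epsilon> m) (\<lambda>m. p' * f \<epsilon> m + p \<epsilon> * f' m) \<epsilon> h)
    \<le> cmod dp * (normE \<beta> \<mu> (f \<epsilon>) + df) + cmod p' * df + cmod (p \<epsilon>) * normE \<beta> \<mu> (diff_quot_error f f' \<epsilon> h)"
proof -
  have err: "diff_quot_error f f' \<epsilon> h \<in> E_space \<beta> \<mu>" by (rule diff_quot_error_E_space[OF f0 f1 f'])
  have d: "(\<lambda>m. f (\<epsilon> + h) m - f \<epsilon> m) \<in> E_space \<beta> \<mu>" by (rule E_space_diff[OF f1 f0])
  have A: "(\<lambda>m. dp * f (\<epsilon> + h) m) \<in> E_space \<beta> \<mu>" by (rule E_space_scale[OF f1])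
  have B: "(\<lambda>m. p' * (f (\<epsilon> + h) m - f \<epsilon> m)) \<in> E_space \<beta> \<mu>" by (rule E_space_scale[OF d])
  have "diff_quot_error (\<lambda>\<epsilon> m. p \<epsilon> * f \<epsilon> m) (\<lambda>m. p' * f \<epsilon> m + p \<epsilon> * f' m) \<epsilon> h
    = (\<lambda>m. (dp * f (\<epsilon> + h) m + p' * (f (\<epsilon> + h) m - f \<epsilon> m)) + p \<epsilon> * diff_quot_error f f' \<epsilon> h m)"
    using h by (simp add: diff_quot_error_def dp_def fun_eq_iff field_simps)
  then have "normE \<beta> \<mu> (diff_quot_error (\<lambda>\<epsilon> m. p \<epsilon> * f \<epsilon> m) (\<lambda>m. p' * f \<epsilon> m + p \<epsilon> * f' m) \<epsilon> h)
      \<le> normE \<beta> \<mu> (\<lambda>m. dp * f (\<epsilon> + h) m + p' * (f (\<epsilon> + h) m - f \<epsilon> m))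
        + normE \<beta> \<mu> (\<lambda>m. p \<epsilon> * diff_quot_error f f' \<epsilon> h m)"
    using normE_add_le[OF E_space_add[OF A B] E_space_scale[OF err]] by simp
  also have "\<dots> \<le> (normE \<beta> \<mu> (\<lambda>m. dp * f (\<epsilon> + h) m) + normE \<beta> \<mu> (\<lambda>m. p' * (f (\<epsilon> + h) m - f \<epsilon> m)))
      + cmod (p \<epsilon>) * normE \<beta> \<mu> (diff_quot_error f f' \<epsilon> h)"
    by (rule add_mono[OF normE_add_le[OF A B] normE_scale_le[OF err]])
  also have "\<dots> \<le> (cmod dp * (normE \<beta> \<mu> (f \<epsilon>) + df) + cmod p' * df)
      + cmod (p \<epsilon>) * normE \<beta> \<mu> (diff_quot_error f f' \<epsilon> h)"
    unfolding df_def
    using normE_scale_le[OF f1, of dp] mult_left_mono[OF normE_le_add_diff[OF f0 f1], of "cmod dp"]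
      normE_scale_le[OF d, of p']
    by (intro add_mono order_refl) (simp_all add: algebra_simps)
  finally show ?thesis by simp
qed

lemma holo_E_scalar_mult:
  assumes f: "holo_E \<beta> \<mu> S f" and S: "open S"
    and p: "\<And>\<epsilon>. \<epsilon> \<in> S \<Longrightarrow> (p has_field_derivative p' \<epsilon>) (at \<epsilon>)"
  shows "holo_E \<beta> \<mu> S (\<lambda>\<epsilon> m. p \<epsilon> * f \<epsilon> m)"
proof (rule holo_EI)
  fix \<epsilon> assume e: "\<epsilon> \<in> S"
  have pf: "(\<lambda>m. p \<epsilon>' * f \<epsilon>' m) \<in> E_space \<beta> \<mu>" if "\<epsilon>' \<in> S" for \<epsilon>'
    using E_space_scale[OF holo_E_E_space[OF f that]] .
  then show "(\<lambda>m. p \<epsilon> * f \<epsilon> m) \<in> E_space \<beta> \<mu>" using e .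
  have f0: "f \<epsilon> \<in> E_space \<beta> \<mu>" by (rule holo_E_E_space[OF f e])
  obtain f' where f': "f' \<in> E_space \<beta> \<mu>"
    and limf: "((\<lambda>h. normE \<beta> \<mu> (diff_quot_error f f' \<epsilon> h)) \<longlongrightarrow> 0) (at 0)"
    using holo_E_derivativeE[OF f e] .
  have "((\<lambda>h. (p (\<epsilon> + h) - p \<epsilon>) / h) \<longlongrightarrow> p' \<epsilon>) (at 0)"
    using p[OF e] by (simp add: DERIV_def)
  then have "((\<lambda>h. (p (\<epsilon> + h) - p \<epsilon>) / h - p' \<epsilon>) \<longlongrightarrow> 0) (at 0)"
    by (rule LIM_zero)
  then have limp: "((\<lambda>h. cmod ((p (\<epsilon> + h) - p \<epsilon>) / h - p' \<epsilon>)) \<longlongrightarrow> 0) (at 0)"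
    by (rule tendsto_norm_zero)
  have limd: "((\<lambda>h. normE \<beta> \<mu> (\<lambda>m. f (\<epsilon> + h) m - f \<epsilon> m)) \<longlongrightarrow> 0) (at 0)"
    by (rule holo_E_continuous[OF f S e])
  define D where "D = (\<lambda>m. p' \<epsilon> * f \<epsilon> m + p \<epsilon> * f' m)"
  have D: "D \<in> E_space \<beta> \<mu>" unfolding D_def by (rule E_space_add[OF E_space_scale[OF f0] E_space_scale[OF f']])
  have "((\<lambda>h. normE \<beta> \<mu> (diff_quot_error (\<lambda>\<epsilon> m. p \<epsilon> * f \<epsilon> m) D \<epsilon> h)) \<longlongrightarrow> 0) (at 0)"
  proof (rule diff_quot_error_tendsto_0[OF S e pf D])
    show "((\<lambda>h. cmod ((p (\<epsilon> + h) - p \<epsilon>) / h - p' \<epsilon>) * (normE \<beta> \<mu> (f \<epsilon>) + normE \<beta> \<mu> (\<lambda>m. f (\<epsilon> + h) m - f \<epsilon> m))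
        + cmod (p' \<epsilon>) * normE \<beta> \<mu> (\<lambda>m. f (\<epsilon> + h) m - f \<epsilon> m)
        + cmod (p \<epsilon>) * normE \<beta> \<mu> (diff_quot_error f f' \<epsilon> h)) \<longlongrightarrow> 0) (at 0)"
      using tendsto_add[OF tendsto_add[OF tendsto_mult[OF limp tendsto_add[OF tendsto_const limd]]
          tendsto_mult_right_zero[OF limd]] tendsto_mult_right_zero[OF limf]] by simp
  next
    fix h :: complex assume h: "h \<noteq> 0" "\<epsilon> + h \<in> S"
    show "normE \<beta> \<mu> (diff_quot_error (\<lambda>\<epsilon> m. p \<epsilon> * f \<epsilon> m) D \<epsilon> h)
        \<le> cmod ((p (\<epsilon> + h) - p \<epsilon>) / h - p' \<epsilon>) * (normE \<beta> \<mu> (f \<epsilon>) + normE \<beta> \<mu> (\<lambda>m. f (\<epsilon> + h) m - f \<epsilon> m))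
          + cmod (p' \<epsilon>) * normE \<beta> \<mu> (\<lambda>m. f (\<epsilon> + h) m - f \<epsilon> m)
          + cmod (p \<epsilon>) * normE \<beta> \<mu> (diff_quot_error f f' \<epsilon> h)"
      unfolding D_def by (rule normE_diff_quot_error_scalar_mult_le[OF f0 holo_E_E_space[OF f h(2)] f' h(1)])
  qed
  with D show "\<exists>d\<in>E_space \<beta> \<mu>. ((\<lambda>h. normE \<beta> \<mu> (diff_quot_error (\<lambda>\<epsilon> m. p \<epsilon> * f \<epsilon> m) d \<epsilon> h)) \<longlongrightarrow> 0) (at 0)"
    by blast
qed

locale E_bilinear =
  fixes \<beta> \<mu> K :: real and B :: "(real \<Rightarrow> complex) \<Rightarrow> (real \<Rightarrow> complex) \<Rightarrow> real \<Rightarrow> complex"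
  assumes E_space_B: "\<And>a b. a \<in> E_space \<beta> \<mu> \<Longrightarrow> b \<in> E_space \<beta> \<mu> \<Longrightarrow> B a b \<in> E_space \<beta> \<mu>"
    and normE_B_le: "\<And>a b. a \<in> E_space \<beta> \<mu> \<Longrightarrow> b \<in> E_space \<beta> \<mu> \<Longrightarrow>
         normE \<beta> \<mu> (B a b) \<le> K * normE \<beta> \<mu> a * normE \<beta> \<mu> b"
    and K_nonneg: "K \<ge> 0"
    and linear_left: "\<And>a1 a2 b x y. a1 \<in> E_space \<beta> \<mu> \<Longrightarrow> a2 \<in> E_space \<beta> \<mu> \<Longrightarrow> b \<in> E_space \<beta> \<mu> \<Longrightarrow>
         B (\<lambda>m. x * a1 m + y * a2 m) b = (\<lambda>m. x * B a1 b m + y * B a2 b m)"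
    and linear_right: "\<And>a b1 b2 x y. a \<in> E_space \<beta> \<mu> \<Longrightarrow> b1 \<in> E_space \<beta> \<mu> \<Longrightarrow> b2 \<in> E_space \<beta> \<mu> \<Longrightarrow>
         B a (\<lambda>m. x * b1 m + y * b2 m) = (\<lambda>m. x * B a b1 m + y * B a b2 m)"
begin

lemma B_diff_right:
  assumes "a \<in> E_space \<beta> \<mu>" "b1 \<in> E_space \<beta> \<mu>" "b2 \<in> E_space \<beta> \<mu>"
  shows "B a (\<lambda>m. b1 m - b2 m) = (\<lambda>m. B a b1 m - B a b2 m)"
  using linear_right[OF assms, of 1 "-1"] by simp

lemma diff_quot_error_as_combination:
  "diff_quot_error f f' \<epsilon> h = (\<lambda>m. 1 * ((1 / h) * f (\<epsilon> + h) m + (- 1 / h) * f \<epsilon> m) + (- 1) * f' m)"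
  by (simp add: diff_quot_error_def fun_eq_iff diff_divide_distrib)

lemma B_diff_quot_error_left:
  assumes "f \<epsilon> \<in> E_space \<beta> \<mu>" "f (\<epsilon> + h) \<in> E_space \<beta> \<mu>" "f' \<in> E_space \<beta> \<mu>" "b \<in> E_space \<beta> \<mu>"
  shows "B (diff_quot_error f f' \<epsilon> h) b = diff_quot_error (\<lambda>\<epsilon>. B (f \<epsilon>) b) (B f' b) \<epsilon> h"
proof -
  have "(\<lambda>m. (1 / h) * f (\<epsilon> + h) m + (- 1 / h) * f \<epsilon> m) \<in> E_space \<beta> \<mu>"
    by (rule E_space_add[OF E_space_scale[OF assms(2)] E_space_scale[OF assms(1)]])
  then show ?thesis
    unfolding diff_quot_error_as_combination
    by (simp only: linear_left assms)
qed

lemma B_diff_quot_error_right: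
  assumes "g \<epsilon> \<in> E_space \<beta> \<mu>" "g (\<epsilon> + h) \<in> E_space \<beta> \<mu>" "g' \<in> E_space \<beta> \<mu>" "a \<in> E_space \<beta> \<mu>"
  shows "B a (diff_quot_error g g' \<epsilon> h) = diff_quot_error (\<lambda>\<epsilon>. B a (g \<epsilon>)) (B a g') \<epsilon> h"
proof -
  have "(\<lambda>m. (1 / h) * g (\<epsilon> + h) m + (- 1 / h) * g \<epsilon> m) \<in> E_space \<beta> \<mu>"
    by (rule E_space_add[OF E_space_scale[OF assms(2)] E_space_scale[OF assms(1)]])
  then show ?thesis
    unfolding diff_quot_error_as_combination
    by (simp only: linear_right assms)
qed

text \<open>Product rule: the difference quotient error of \<open>B (f \<epsilon>) (g \<epsilon>)\<close> splits as
  \<open>B (err f) (g (\<epsilon> + h)) + B f' (g (\<epsilon> + h) - g \<epsilon>) + B (f \<epsilon>) (err g)\<close>.\<close>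

lemma normE_diff_quot_error_B_le:
  assumes f0: "f \<epsilon> \<in> E_space \<beta> \<mu>" and f1: "f (\<epsilon> + h) \<in> E_space \<beta> \<mu>" and f': "f' \<in> E_space \<beta> \<mu>"
    and g0: "g \<epsilon> \<in> E_space \<beta> \<mu>" and g1: "g (\<epsilon> + h) \<in> E_space \<beta> \<mu>" and g': "g' \<in> E_space \<beta> \<mu>"
    and h: "h \<noteq> 0"
  defines "dg \<equiv> normE \<beta> \<mu> (\<lambda>m. g (\<epsilon> + h) m - g \<epsilon> m)"
  shows "normE \<beta> \<mu> (diff_quot_error (\<lambda>\<epsilon>. B (f \<epsilon>) (g \<epsilon>)) (\<lambda>m. B f' (g \<epsilon>) m + B (f \<epsilon>) g' m) \<epsilon> h)
    \<le> K * normE \<beta> \<mu> (diff_quot_error f f' \<epsilon> h) * (normE \<beta> \<mu> (g \<epsilon>) + dg)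
      + K * normE \<beta> \<mu> f' * dg + K * normE \<beta> \<mu> (f \<epsilon>) * normE \<beta> \<mu> (diff_quot_error g g' \<epsilon> h)"
proof -
  have ef: "diff_quot_error f f' \<epsilon> h \<in> E_space \<beta> \<mu>" by (rule diff_quot_error_E_space[OF f0 f1 f'])
  have eg: "diff_quot_error g g' \<epsilon> h \<in> E_space \<beta> \<mu>" by (rule diff_quot_error_E_space[OF g0 g1 g'])
  have d: "(\<lambda>m. g (\<epsilon> + h) m - g \<epsilon> m) \<in> E_space \<beta> \<mu>" by (rule E_space_diff[OF g1 g0])
  have A: "B (diff_quot_error f f' \<epsilon> h) (g (\<epsilon> + h)) \<in> E_space \<beta> \<mu>" by (rule E_space_B[OF ef g1])
  have A': "B f' (\<lambda>m. g (\<epsilon> + h) m - g \<epsilon> m) \<in> E_space \<beta> \<mu>" by (rule E_space_B[OF f' d])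
  have A'': "B (f \<epsilon>) (diff_quot_error g g' \<epsilon> h) \<in> E_space \<beta> \<mu>" by (rule E_space_B[OF f0 eg])
  have "diff_quot_error (\<lambda>\<epsilon>. B (f \<epsilon>) (g \<epsilon>)) (\<lambda>m. B f' (g \<epsilon>) m + B (f \<epsilon>) g' m) \<epsilon> h
    = (\<lambda>m. (B (diff_quot_error f f' \<epsilon> h) (g (\<epsilon> + h)) m + B f' (\<lambda>m. g (\<epsilon> + h) m - g \<epsilon> m) m)
           + B (f \<epsilon>) (diff_quot_error g g' \<epsilon> h) m)"
    unfolding B_diff_quot_error_left[OF f0 f1 f' g1] B_diff_quot_error_right[OF g0 g1 g' f0]
      B_diff_right[OF f' g1 g0]
    using h by (simp add: diff_quot_error_def fun_eq_iff field_simps)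
  then have "normE \<beta> \<mu> (diff_quot_error (\<lambda>\<epsilon>. B (f \<epsilon>) (g \<epsilon>)) (\<lambda>m. B f' (g \<epsilon>) m + B (f \<epsilon>) g' m) \<epsilon> h)
      \<le> (normE \<beta> \<mu> (B (diff_quot_error f f' \<epsilon> h) (g (\<epsilon> + h))) + normE \<beta> \<mu> (B f' (\<lambda>m. g (\<epsilon> + h) m - g \<epsilon> m)))
        + normE \<beta> \<mu> (B (f \<epsilon>) (diff_quot_error g g' \<epsilon> h))"
    using order_trans[OF normE_add_le[OF E_space_add[OF A A'] A''] add_right_mono[OF normE_add_le[OF A A']]]
    by simp
  also have "\<dots> \<le> (K * normE \<beta> \<mu> (diff_quot_error f f' \<epsilon> h) * (normE \<beta> \<mu> (g \<epsilon>) + dg)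
      + K * normE \<beta> \<mu> f' * dg) + K * normE \<beta> \<mu> (f \<epsilon>) * normE \<beta> \<mu> (diff_quot_error g g' \<epsilon> h)"
  proof (intro add_mono)
    show "normE \<beta> \<mu> (B (diff_quot_error f f' \<epsilon> h) (g (\<epsilon> + h)))
        \<le> K * normE \<beta> \<mu> (diff_quot_error f f' \<epsilon> h) * (normE \<beta> \<mu> (g \<epsilon>) + dg)"
      using normE_B_le[OF ef g1] mult_left_mono[OF normE_le_add_diff[OF g0 g1]] K_nonneg normE_nonneg[OF ef]
      unfolding dg_def by (smt (verit, ccfv_SIG) mult_nonneg_nonneg)
  qed (use normE_B_le[OF f' d] normE_B_le[OF f0 eg] in \<open>simp_all add: dg_def\<close>)
  finally show ?thesis by simp
qed

lemma holo_E_B: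
  assumes f: "holo_E \<beta> \<mu> S f" and g: "holo_E \<beta> \<mu> S g" and S: "open S"
  shows "holo_E \<beta> \<mu> S (\<lambda>\<epsilon>. B (f \<epsilon>) (g \<epsilon>))"
proof (rule holo_EI)
  fix \<epsilon> assume e: "\<epsilon> \<in> S"
  have fgE: "B (f \<epsilon>') (g \<epsilon>') \<in> E_space \<beta> \<mu>" if "\<epsilon>' \<in> S" for \<epsilon>'
    using E_space_B[OF holo_E_E_space[OF f that] holo_E_E_space[OF g that]] .
  then show "B (f \<epsilon>) (g \<epsilon>) \<in> E_space \<beta> \<mu>" using e .
  have f0: "f \<epsilon> \<in> E_space \<beta> \<mu>" and g0: "g \<epsilon> \<in> E_space \<beta> \<mu>"
    using holo_E_E_space f g e by auto
  obtain f' where f': "f' \<in> E_space \<beta> \<mu>"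
    and limf: "((\<lambda>h. normE \<beta> \<mu> (diff_quot_error f f' \<epsilon> h)) \<longlongrightarrow> 0) (at 0)"
    using holo_E_derivativeE[OF f e] .
  obtain g' where g': "g' \<in> E_space \<beta> \<mu>"
    and limg: "((\<lambda>h. normE \<beta> \<mu> (diff_quot_error g g' \<epsilon> h)) \<longlongrightarrow> 0) (at 0)"
    using holo_E_derivativeE[OF g e] .
  have limd: "((\<lambda>h. normE \<beta> \<mu> (\<lambda>m. g (\<epsilon> + h) m - g \<epsilon> m)) \<longlongrightarrow> 0) (at 0)"
    by (rule holo_E_continuous[OF g S e])
  define D where "D = (\<lambda>m. B f' (g \<epsilon>) m + B (f \<epsilon>) g' m)"
  have D: "D \<in> E_space \<beta> \<mu>"
    unfolding D_def by (rule E_space_add[OF E_space_B[OF f' g0] E_space_B[OF f0 g']])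
  have "((\<lambda>h. normE \<beta> \<mu> (diff_quot_error (\<lambda>\<epsilon>. B (f \<epsilon>) (g \<epsilon>)) D \<epsilon> h)) \<longlongrightarrow> 0) (at 0)"
  proof (rule diff_quot_error_tendsto_0[OF S e fgE D])
    show "((\<lambda>h. K * normE \<beta> \<mu> (diff_quot_error f f' \<epsilon> h) * (normE \<beta> \<mu> (g \<epsilon>) + normE \<beta> \<mu> (\<lambda>m. g (\<epsilon> + h) m - g \<epsilon> m))
        + K * normE \<beta> \<mu> f' * normE \<beta> \<mu> (\<lambda>m. g (\<epsilon> + h) m - g \<epsilon> m)
        + K * normE \<beta> \<mu> (f \<epsilon>) * normE \<beta> \<mu> (diff_quot_error g g' \<epsilon> h)) \<longlongrightarrow> 0) (at 0)"
      using tendsto_add[OF tendsto_add[OF tendsto_mult[OF tendsto_mult_right_zero[OF limf] tendsto_add[OF tendsto_const limd]]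
          tendsto_mult_right_zero[OF limd]] tendsto_mult_right_zero[OF limg]] by simp
  next
    fix h :: complex assume h: "h \<noteq> 0" "\<epsilon> + h \<in> S"
    show "normE \<beta> \<mu> (diff_quot_error (\<lambda>\<epsilon>. B (f \<epsilon>) (g \<epsilon>)) D \<epsilon> h)
        \<le> K * normE \<beta> \<mu> (diff_quot_error f f' \<epsilon> h) * (normE \<beta> \<mu> (g \<epsilon>) + normE \<beta> \<mu> (\<lambda>m. g (\<epsilon> + h) m - g \<epsilon> m))
          + K * normE \<beta> \<mu> f' * normE \<beta> \<mu> (\<lambda>m. g (\<epsilon> + h) m - g \<epsilon> m)
          + K * normE \<beta> \<mu> (f \<epsilon>) * normE \<beta> \<mu> (diff_quot_error g g' \<epsilon> h)"
      unfolding D_def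
      by (rule normE_diff_quot_error_B_le[OF f0 holo_E_E_space[OF f h(2)] f' g0 holo_E_E_space[OF g h(2)] g' h(1)])
  qed
  with D show "\<exists>d\<in>E_space \<beta> \<mu>. ((\<lambda>h. normE \<beta> \<mu> (diff_quot_error (\<lambda>\<epsilon>. B (f \<epsilon>) (g \<epsilon>)) d \<epsilon> h)) \<longlongrightarrow> 0) (at 0)"
    by blast
qed

end


lemma powr_neg_le_of_le_double:
  fixes x z s :: real
  assumes "0 < z" "z \<le> 2 * x" "0 < s" "1 \<le> x"
  shows "x powr (-s) \<le> 2 powr s * z powr (-s)"
proof -
  have "z powr s \<le> (2 * x) powr s" using assms by (intro powr_mono2) auto
  also have "\<dots> = 2 powr s * x powr s" using assms by (simp add: powr_mult)
  finally have h: "z powr s \<le> 2 powr s * x powr s" .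
  have "x powr (-s) = 1 / x powr s" using assms by (simp add: powr_minus divide_inverse)
  also have "\<dots> \<le> 2 powr s / z powr s"
    using h assms by (simp add: field_simps)
  also have "\<dots> = 2 powr s * z powr (-s)" using assms by (simp add: powr_minus divide_inverse)
  finally show ?thesis .
qed

text \<open>Since \<open>z \<le> x + y\<close>, the larger of \<open>x\<close>, \<open>y\<close> is at least \<open>z / 2\<close>; this turns the
  product of the weights of \<open>m - m\<^sub>1\<close> and \<open>m\<^sub>1\<close> in the convolution into a weight of \<open>m\<close>.\<close>

lemma powr_neg_mult_le_split:
  fixes x y z s \<mu> :: real
  assumes "1 \<le> x" "1 \<le> y" "z \<le> x + y" "0 < z" "0 < s" "s \<le> \<mu>"
  shows "x powr (-\<mu>) * y powr (-s) \<le> 2 powr s * z powr (-s) * (y powr (-s) + x powr (-\<mu>))"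
proof (cases "y \<le> x")
  case True
  have a: "x powr (-s) \<le> 2 powr s * z powr (-s)" by (rule powr_neg_le_of_le_double) (use assms True in auto)
  have b: "x powr (-\<mu>) \<le> x powr (-s)" using assms by (intro powr_mono) auto
  have yp: "0 \<le> y powr (-s)" by simp
  have "x powr (-\<mu>) * y powr (-s) \<le> x powr (-s) * y powr (-s)" by (rule mult_right_mono[OF b yp])
  also have "\<dots> \<le> 2 powr s * z powr (-s) * y powr (-s)" by (rule mult_right_mono[OF a yp])
  also have "\<dots> \<le> 2 powr s * z powr (-s) * (y powr (-s) + x powr (-\<mu>))"
    by (intro mult_left_mono) auto
  finally show ?thesis .
next
  case False
  have a: "y powr (-s) \<le> 2 powr s * z powr (-s)" by (rule powr_neg_le_of_le_double) (use assms False in auto)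
  have xp: "0 \<le> x powr (-\<mu>)" by simp
  have "x powr (-\<mu>) * y powr (-s) \<le> x powr (-\<mu>) * (2 powr s * z powr (-s))" by (rule mult_left_mono[OF a xp])
  also have "\<dots> \<le> 2 powr s * z powr (-s) * (y powr (-s) + x powr (-\<mu>))"
    by (simp add: algebra_simps)
  finally show ?thesis .
qed

lemma norm_poly_le_pow: "\<exists>c\<ge>0. \<forall>z::complex. cmod (poly R z) \<le> c * (1 + cmod z) ^ degree R"
proof (intro exI conjI allI)
  show "0 \<le> (\<Sum>i\<le>degree R. cmod (coeff R i))" by (simp add: sum_nonneg)
  fix z :: complex
  have "cmod (poly R z) = cmod (\<Sum>i\<le>degree R. coeff R i * z ^ i)" by (simp add: poly_altdef)
  also have "\<dots> \<le> (\<Sum>i\<le>degree R. cmod (coeff R i * z ^ i))" by (rule norm_sum)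
  also have "\<dots> \<le> (\<Sum>i\<le>degree R. cmod (coeff R i) * (1 + cmod z) ^ degree R)"
  proof (rule sum_mono)
    fix i assume i: "i \<in> {..degree R}"
    have "cmod z ^ i \<le> (1 + cmod z) ^ i" by (intro power_mono) auto
    also have "\<dots> \<le> (1 + cmod z) ^ degree R" using i by (intro power_increasing) auto
    finally show "cmod (coeff R i * z ^ i) \<le> cmod (coeff R i) * (1 + cmod z) ^ degree R"
      by (simp add: norm_mult norm_power mult_left_mono)
  qed
  also have "\<dots> = (\<Sum>i\<le>degree R. cmod (coeff R i)) * (1 + cmod z) ^ degree R"
    by (simp add: sum_distrib_right)
  finally show "cmod (poly R z) \<le> (\<Sum>i\<le>degree R. cmod (coeff R i)) * (1 + cmod z) ^ degree R" .
qed

lemma poly_div_convergent_at_infinity: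
  fixes P Q :: "complex poly"
  assumes "degree P \<le> degree Q" "Q \<noteq> 0"
  obtains L where "((\<lambda>z. poly P z / poly Q z) \<longlongrightarrow> L) at_infinity"
proof (cases "degree P < degree Q")
  case True
  show ?thesis by (rule that[OF poly_divide_tendsto_0_at_infinity[OF True]])
next
  case False
  then have deg: "degree P = degree Q" using assms(1) by simp
  have lim: "((\<lambda>z. (poly P z / z ^ degree P) / (poly Q z / z ^ degree Q)) \<longlongrightarrow> lead_coeff P / lead_coeff Q) at_infinity"
    using assms(2) by (intro tendsto_divide poly_divide_tendsto_aux) simp
  have ev: "\<forall>\<^sub>F z in at_infinity. (poly P z / z ^ degree P) / (poly Q z / z ^ degree Q) = poly P z / poly Q z"
    unfolding eventually_at_infinity deg
  proof (intro exI[of _ 1] allI impI)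
    fix z :: complex assume "1 \<le> norm z"
    then have "z ^ degree Q \<noteq> 0" by auto
    then show "(poly P z / z ^ degree Q) / (poly Q z / z ^ degree Q) = poly P z / poly Q z"
      by (simp add: divide_divide_times_eq)
  qed
  show ?thesis
    by (rule that[OF tendsto_cong[THEN iffD1, OF ev lim]])
qed

lemma poly_div_imag_axis_bounded:
  fixes P Q :: "complex poly"
  assumes deg: "degree P \<le> degree Q" and Q: "\<And>m::real. poly Q (\<i> * of_real m) \<noteq> 0"
  obtains K where "\<And>m::real. cmod (poly P (\<i> * of_real m) / poly Q (\<i> * of_real m)) \<le> K"
proof -
  define f where "f m = cmod (poly P (\<i> * of_real m) / poly Q (\<i> * of_real m))" for m :: real
  have "Q \<noteq> 0" using Q[of 0] by auto
  then obtain L where "((\<lambda>z. poly P z / poly Q z) \<longlongrightarrow> L) at_infinity"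
    using poly_div_convergent_at_infinity[OF deg] by blast
  then have "\<forall>\<^sub>F z in at_infinity. cmod (poly P z / poly Q z) < cmod L + 1"
    by (rule order_tendstoD(2)[OF tendsto_norm]) simp
  then obtain b where far: "\<And>z. b \<le> cmod z \<Longrightarrow> cmod (poly P z / poly Q z) < cmod L + 1"
    unfolding eventually_at_infinity by blast
  have "continuous_on {-b..b} f"
    unfolding f_def using Q by (intro continuous_intros) auto
  then have "bounded (f ` {-b..b})"
    by (intro compact_imp_bounded compact_continuous_image) auto
  then obtain M where near: "\<And>m. m \<in> {-b..b} \<Longrightarrow> norm (f m) \<le> M"
    unfolding bounded_iff by blast
  have "f m \<le> max (cmod L + 1) M" for m
  proof (cases "b \<le> \<bar>m\<bar>")
    case True
    then show ?thesis using far[of "\<i> * of_real m"] by (simp add: f_def norm_mult)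
  next
    case False
    then have "m \<in> {-b..b}" by auto
    then show ?thesis using near[of m] by (simp add: f_def)
  qed
  then show ?thesis using that unfolding f_def by blast
qed

lemma poly_imag_axis_lower_bound:
  fixes Q :: "complex poly"
  assumes r: "r \<le> degree Q" and Q: "\<And>m::real. poly Q (\<i> * of_real m) \<noteq> 0"
  shows "\<exists>c>0. \<forall>m::real. c * (1 + \<bar>m\<bar>) ^ r \<le> cmod (poly Q (\<i> * of_real m))"
proof -
  define P :: "complex poly" where "P = [:1, 1:] ^ r"
  have dP: "degree P = r" unfolding P_def by (subst degree_power_eq) auto
  obtain K0 where "\<And>m::real. cmod (poly P (\<i> * of_real m) / poly Q (\<i> * of_real m)) \<le> K0"
    using poly_div_imag_axis_bounded[of P Q] r Q dP by auto
  then have K: "cmod (poly P (\<i> * of_real m)) \<le> K0 * cmod (poly Q (\<i> * of_real m))" for m :: real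
    using Q[of m] by (simp add: norm_divide divide_le_eq)
  define K' where "K' = max K0 1"
  have K'pos: "K' > 0" unfolding K'_def by simp
  show ?thesis
  proof (intro exI[of _ "1 / (2 ^ r * K')"] conjI allI)
    show "0 < 1 / (2 ^ r * K')" using K'pos by simp
    fix m :: real
    have b1: "1 + \<bar>m\<bar> \<le> 2 * cmod (1 + \<i> * of_real m)"
    proof -
      have "1 \<le> cmod (1 + \<i> * of_real m)" using abs_Re_le_cmod[of "1 + \<i> * of_real m"] by simp
      moreover have "\<bar>m\<bar> \<le> cmod (1 + \<i> * of_real m)" using abs_Im_le_cmod[of "1 + \<i> * of_real m"] by simp
      ultimately show ?thesis by linarith
    qed
    have "(1 + \<bar>m\<bar>) ^ r \<le> (2 * cmod (1 + \<i> * of_real m)) ^ r"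
      by (rule power_mono[OF b1]) simp
    also have "\<dots> = 2 ^ r * cmod (poly P (\<i> * of_real m))"
      unfolding P_def by (simp add: norm_power power_mult_distrib)
    also have "\<dots> \<le> 2 ^ r * (K' * cmod (poly Q (\<i> * of_real m)))"
    proof -
      have "K0 * cmod (poly Q (\<i> * of_real m)) \<le> K' * cmod (poly Q (\<i> * of_real m))"
        unfolding K'_def by (intro mult_right_mono) auto
      then show ?thesis using K[of m] by simp
    qed
    finally show "1 / (2 ^ r * K') * (1 + \<bar>m\<bar>) ^ r \<le> cmod (poly Q (\<i> * of_real m))"
      using K'pos by (simp add: field_simps)
  qed
qed

lemma continuous_on_one_plus_abs_powr: "continuous_on UNIV (\<lambda>x::real. (1 + \<bar>x\<bar>) powr (-t))"
  by (intro continuous_intros) auto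

lemma measurable_one_plus_abs_powr: "(\<lambda>x::real. (1 + \<bar>x\<bar>) powr (-t)) \<in> borel_measurable lebesgue"
  using continuous_imp_measurable_on_sets_lebesgue[OF continuous_on_one_plus_abs_powr[of t]] by (simp add: lebesgue_on_UNIV_eq)

lemma integrable_one_plus_abs_powr:
  assumes t: "t > 1"
  shows "integrable lebesgue (\<lambda>x::real. (1 + \<bar>x\<bar>) powr (-t))"
proof -
  have "((\<lambda>x::real. x powr (-t)) has_integral (-(1 powr (-t+1)) / (-t+1))) {1..}"
    by (rule has_integral_powr_to_inf) (use t in auto)
  then have "(\<lambda>x::real. x powr (-t)) integrable_on {1..}" by blast
  then have "(\<lambda>x::real. x powr (-t)) absolutely_integrable_on {1..}"
    by (rule nonnegative_absolutely_integrable_1) simp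
  then have f0: "integrable lebesgue (\<lambda>x::real. indicator {1..} x *\<^sub>R x powr (-t))"
    by (simp add: set_integrable_def)
  define f0 where "f0 = (\<lambda>x::real. indicator {1..} x *\<^sub>R x powr (-t))"
  have i1: "integrable lebesgue (\<lambda>x. f0 (1 + 1 * x))"
    by (rule lebesgue_integrable_real_affine) (use f0 in \<open>auto simp: f0_def\<close>)
  have i2: "integrable lebesgue (\<lambda>x. f0 (1 + (-1) * x))"
    by (rule lebesgue_integrable_real_affine) (use f0 in \<open>auto simp: f0_def\<close>)
  have i3: "integrable lebesgue (\<lambda>x. f0 (1 + 1 * x) + f0 (1 + (-1) * x))"
    by (rule Bochner_Integration.integrable_add[OF i1 i2])
  show ?thesis
  proof (rule Bochner_Integration.integrable_bound[OF i3 measurable_one_plus_abs_powr])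
    show "AE x in lebesgue. norm ((1 + \<bar>x\<bar>) powr (-t)) \<le> norm (f0 (1 + 1 * x) + f0 (1 + (-1) * x))"
    proof (rule AE_I2)
      fix x :: real
      have n1: "0 \<le> f0 (1 + 1 * x)" "0 \<le> f0 (1 + (-1) * x)" unfolding f0_def by (auto simp: indicator_def)
      show "norm ((1 + \<bar>x\<bar>) powr (-t)) \<le> norm (f0 (1 + 1 * x) + f0 (1 + (-1) * x))"
      proof (cases "x \<ge> 0")
        case True
        then have "f0 (1 + 1 * x) = (1 + \<bar>x\<bar>) powr (-t)" unfolding f0_def by (simp add: indicator_def)
        then show ?thesis using n1 by simp
      next
        case False
        then have "f0 (1 + (-1) * x) = (1 + \<bar>x\<bar>) powr (-t)" unfolding f0_def by (simp add: indicator_def)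
        then show ?thesis using n1 by simp
      qed
    qed
  qed
qed

lemma one_plus_abs_diff_powr:
  assumes t: "t > 1"
  shows "integrable lebesgue (\<lambda>x::real. (1 + \<bar>m - x\<bar>) powr (-t))"
    and "integral\<^sup>L lebesgue (\<lambda>x::real. (1 + \<bar>m - x\<bar>) powr (-t)) = integral\<^sup>L lebesgue (\<lambda>x::real. (1 + \<bar>x\<bar>) powr (-t))"
proof -
  have "integrable lebesgue (\<lambda>x::real. (\<lambda>y. (1 + \<bar>y\<bar>) powr (-t)) (m + (-1) * x))"
    by (rule lebesgue_integrable_real_affine[OF integrable_one_plus_abs_powr[OF t]]) simp
  then show "integrable lebesgue (\<lambda>x::real. (1 + \<bar>m - x\<bar>) powr (-t))" by simp
  have "integral\<^sup>L lebesgue (\<lambda>y::real. (1 + \<bar>y\<bar>) powr (-t)) = \<bar>-1\<bar> *\<^sub>R integral\<^sup>L lebesgue (\<lambda>x::real. (\<lambda>y. (1 + \<bar>y\<bar>) powr (-t)) (m + (-1) * x))"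
    by (rule lebesgue_integral_real_affine) simp
  then show "integral\<^sup>L lebesgue (\<lambda>x::real. (1 + \<bar>m - x\<bar>) powr (-t)) = integral\<^sup>L lebesgue (\<lambda>x::real. (1 + \<bar>x\<bar>) powr (-t))"
    by simp
qed


definition poly_conv_integrand :: "complex poly \<Rightarrow> (real \<Rightarrow> complex) \<Rightarrow> (real \<Rightarrow> complex) \<Rightarrow> real \<Rightarrow> real \<Rightarrow> complex" where
  "poly_conv_integrand R a b m = (\<lambda>m1. a (m - m1) * poly R (\<i> * complex_of_real m1) * b m1)"

definition poly_conv :: "complex poly \<Rightarrow> (real \<Rightarrow> complex) \<Rightarrow> (real \<Rightarrow> complex) \<Rightarrow> real \<Rightarrow> complex" where
  "poly_conv R a b m = integral\<^sup>L lebesgue (poly_conv_integrand R a b m)"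

lemma continuous_on_poly_conv_integrand:
  assumes "a \<in> E_space \<beta> \<mu>" "b \<in> E_space \<beta> \<mu>"
  shows "continuous_on UNIV (poly_conv_integrand R a b m)"
proof -
  have ca: "continuous_on UNIV a" and cb: "continuous_on UNIV b" using E_space_continuous assms by auto
  have "continuous_on UNIV (\<lambda>m1. a (m - m1))"
    by (rule continuous_on_compose2[OF ca]) (auto intro: continuous_intros)
  then show ?thesis unfolding poly_conv_integrand_def using cb by (intro continuous_intros) auto
qed

lemma poly_conv_integrand_measurable:
  assumes "a \<in> E_space \<beta> \<mu>" "b \<in> E_space \<beta> \<mu>"
  shows "poly_conv_integrand R a b m \<in> borel_measurable lebesgue"
  using continuous_imp_measurable_on_sets_lebesgue[OF continuous_on_poly_conv_integrand[OF assms]] by (simp add: lebesgue_on_UNIV_eq)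

lemma norm_poly_conv_integrand_le:
  assumes a: "a \<in> E_space \<beta> \<mu>" and b: "b \<in> E_space \<beta> \<mu>" and \<beta>: "\<beta> \<ge> 0" and \<mu>: "\<mu> \<ge> 0"
    and c: "\<And>z. cmod (poly R z) \<le> c * (1 + cmod z) ^ degree R"
  shows "cmod (poly_conv_integrand R a b m m1) \<le> normE \<beta> \<mu> a * c * normE \<beta> \<mu> b * (1 + \<bar>m1\<bar>) powr (real (degree R) - \<mu>)"
proof -
  have "cmod (poly R 0) \<le> c" using c[of 0] by simp
  then have c0: "0 \<le> c" using norm_ge_zero[of "poly R 0"] by linarith
  have p: "cmod (poly R (\<i> * complex_of_real m1)) \<le> c * (1 + \<bar>m1\<bar>) ^ degree R"
    using c[of "\<i> * complex_of_real m1"] by (simp add: norm_mult)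
  have A: "cmod (a (m - m1)) \<le> normE \<beta> \<mu> a" by (rule norm_le_normE[OF a \<beta> \<mu>])
  have B: "cmod (b m1) \<le> normE \<beta> \<mu> b * (1 + \<bar>m1\<bar>) powr (-\<mu>)" by (rule norm_le_normE_powr[OF b \<beta>])
  have "cmod (poly_conv_integrand R a b m m1) = cmod (a (m - m1)) * cmod (poly R (\<i> * complex_of_real m1)) * cmod (b m1)"
    unfolding poly_conv_integrand_def by (simp add: norm_mult)
  also have "\<dots> \<le> normE \<beta> \<mu> a * (c * (1 + \<bar>m1\<bar>) ^ degree R) * (normE \<beta> \<mu> b * (1 + \<bar>m1\<bar>) powr (-\<mu>))"
    by (intro mult_mono A B p) (simp_all add: normE_nonneg[OF a] c0)
  also have "(1 + \<bar>m1\<bar>) ^ degree R = (1 + \<bar>m1\<bar>) powr real (degree R)"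
    by (simp add: powr_realpow add_pos_nonneg)
  also have "normE \<beta> \<mu> a * (c * (1 + \<bar>m1\<bar>) powr real (degree R)) * (normE \<beta> \<mu> b * (1 + \<bar>m1\<bar>) powr - \<mu>)
     = normE \<beta> \<mu> a * c * normE \<beta> \<mu> b * ((1 + \<bar>m1\<bar>) powr real (degree R) * (1 + \<bar>m1\<bar>) powr - \<mu>)"
    by (simp add: algebra_simps)
  also have "(1 + \<bar>m1\<bar>) powr real (degree R) * (1 + \<bar>m1\<bar>) powr - \<mu> = (1 + \<bar>m1\<bar>) powr (real (degree R) - \<mu>)"
    by (simp add: powr_add[symmetric])
  finally show ?thesis .
qed

lemma integrable_poly_conv_integrand:
  assumes a: "a \<in> E_space \<beta> \<mu>" and b: "b \<in> E_space \<beta> \<mu>" and \<beta>: "\<beta> \<ge> 0" and \<mu>: "\<mu> > real (degree R) + 1"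
  shows "integrable lebesgue (poly_conv_integrand R a b m)"
proof -
  obtain c where c0: "c \<ge> 0" and c: "\<And>z. cmod (poly R z) \<le> c * (1 + cmod z) ^ degree R"
    using norm_poly_le_pow[of R] by blast
  have ig: "integrable lebesgue (\<lambda>x::real. normE \<beta> \<mu> a * c * normE \<beta> \<mu> b * (1 + \<bar>x\<bar>) powr (-(\<mu> - real (degree R))))"
    by (intro Bochner_Integration.integrable_mult_right integrable_one_plus_abs_powr) (use \<mu> in simp)
  show ?thesis
  proof (rule Bochner_Integration.integrable_bound[OF ig poly_conv_integrand_measurable[OF a b]])
    show "AE x in lebesgue. norm (poly_conv_integrand R a b m x) \<le> norm (normE \<beta> \<mu> a * c * normE \<beta> \<mu> b * (1 + \<bar>x\<bar>) powr (-(\<mu> - real (degree R))))"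
    proof (rule AE_I2)
      fix x
      have "norm (poly_conv_integrand R a b m x) \<le> normE \<beta> \<mu> a * c * normE \<beta> \<mu> b * (1 + \<bar>x\<bar>) powr (real (degree R) - \<mu>)"
        using norm_poly_conv_integrand_le[OF a b \<beta> _ c] \<mu> by simp
      also have "\<dots> \<le> norm (normE \<beta> \<mu> a * c * normE \<beta> \<mu> b * (1 + \<bar>x\<bar>) powr (-(\<mu> - real (degree R))))"
        by simp
      finally show "norm (poly_conv_integrand R a b m x) \<le> norm (normE \<beta> \<mu> a * c * normE \<beta> \<mu> b * (1 + \<bar>x\<bar>) powr (-(\<mu> - real (degree R))))" .
    qed
  qed
qed

lemma continuous_on_poly_conv:
  assumes a: "a \<in> E_space \<beta> \<mu>" and b: "b \<in> E_space \<beta> \<mu>" and \<beta>: "\<beta> \<ge> 0" and \<mu>: "\<mu> > real (degree R) + 1"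
  shows "continuous_on UNIV (poly_conv R a b)"
proof (rule continuous_on_sequentiallyI)
  fix u :: "nat \<Rightarrow> real" and m assume u: "u \<longlonglongrightarrow> m"
  obtain c where c0: "c \<ge> 0" and c: "\<And>z. cmod (poly R z) \<le> c * (1 + cmod z) ^ degree R"
    using norm_poly_le_pow[of R] by blast
  have ig: "integrable lebesgue (\<lambda>x::real. normE \<beta> \<mu> a * c * normE \<beta> \<mu> b * (1 + \<bar>x\<bar>) powr (-(\<mu> - real (degree R))))"
    by (intro Bochner_Integration.integrable_mult_right integrable_one_plus_abs_powr) (use \<mu> in simp)
  have ca: "continuous_on UNIV a" using E_space_continuous[OF a] .
  have "(\<lambda>i. integral\<^sup>L lebesgue (poly_conv_integrand R a b (u i))) \<longlonglongrightarrow> integral\<^sup>L lebesgue (poly_conv_integrand R a b m)"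
  proof (rule integral_dominated_convergence[OF poly_conv_integrand_measurable[OF a b] poly_conv_integrand_measurable[OF a b] ig])
    show "AE x in lebesgue. (\<lambda>i. poly_conv_integrand R a b (u i) x) \<longlonglongrightarrow> poly_conv_integrand R a b m x"
    proof (rule AE_I2)
      fix x
      have "(\<lambda>i. u i - x) \<longlonglongrightarrow> m - x" by (intro tendsto_intros u)
      then have "(\<lambda>i. a (u i - x)) \<longlonglongrightarrow> a (m - x)"
        by (rule isCont_tendsto_compose[rotated]) (use ca in \<open>simp add: continuous_on_eq_continuous_at\<close>)
      then show "(\<lambda>i. poly_conv_integrand R a b (u i) x) \<longlonglongrightarrow> poly_conv_integrand R a b m x"
        unfolding poly_conv_integrand_def by (intro tendsto_intros)
    qed
    fix i
    show "AE x in lebesgue. norm (poly_conv_integrand R a b (u i) x) \<le> normE \<beta> \<mu> a * c * normE \<beta> \<mu> b * (1 + \<bar>x\<bar>) powr (-(\<mu> - real (degree R)))"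
      using norm_poly_conv_integrand_le[OF a b \<beta> _ c, of "u i"] \<mu> by (intro AE_I2) simp
  qed
  then show "(\<lambda>i. poly_conv R a b (u i)) \<longlonglongrightarrow> poly_conv R a b m" unfolding poly_conv_def .
qed

lemma exp_neg_mult_abs_triangle:
  fixes \<beta> m m1 :: real
  assumes "\<beta> \<ge> 0"
  shows "exp (- \<beta> * \<bar>m - m1\<bar>) * exp (- \<beta> * \<bar>m1\<bar>) \<le> exp (- \<beta> * \<bar>m\<bar>)"
proof -
  have "\<beta> * \<bar>m\<bar> \<le> \<beta> * (\<bar>m - m1\<bar> + \<bar>m1\<bar>)"
    using assms by (intro mult_left_mono) linarith+
  then show ?thesis by (simp add: exp_add[symmetric] algebra_simps)
qed

lemma norm_poly_conv_integrand_le_split: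
  assumes a: "a \<in> E_space \<beta> \<mu>" and b: "b \<in> E_space \<beta> \<mu>" and \<beta>: "\<beta> \<ge> 0" and \<mu>: "\<mu> > real (degree R) + 1"
    and c0: "c \<ge> 0" and c: "\<And>z. cmod (poly R z) \<le> c * (1 + cmod z) ^ degree R"
  shows "cmod (poly_conv_integrand R a b m m1) \<le> normE \<beta> \<mu> a * normE \<beta> \<mu> b * c * exp (- \<beta> * \<bar>m\<bar>) * 2 powr (\<mu> - real (degree R))
     * (1 + \<bar>m\<bar>) powr (-(\<mu> - real (degree R))) * ((1 + \<bar>m1\<bar>) powr (-(\<mu> - real (degree R))) + (1 + \<bar>m - m1\<bar>) powr (-\<mu>))"
proof -
  define s where "s = \<mu> - real (degree R)"
  define x where "x = 1 + \<bar>m - m1\<bar>"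
  define y where "y = 1 + \<bar>m1\<bar>"
  define z where "z = 1 + \<bar>m\<bar>"
  have s: "0 < s" "s \<le> \<mu>" using \<mu> unfolding s_def by auto
  have na: "0 \<le> normE \<beta> \<mu> a" and nb: "0 \<le> normE \<beta> \<mu> b" using normE_nonneg a b by auto
  have A: "cmod (a (m - m1)) \<le> normE \<beta> \<mu> a * (x powr (-\<mu>) * exp (- \<beta> * \<bar>m - m1\<bar>))"
    unfolding x_def by (rule norm_le_normE_decay[OF a])
  have B: "cmod (b m1) \<le> normE \<beta> \<mu> b * (y powr (-\<mu>) * exp (- \<beta> * \<bar>m1\<bar>))"
    unfolding y_def by (rule norm_le_normE_decay[OF b])
  have p: "cmod (poly R (\<i> * complex_of_real m1)) \<le> c * y powr real (degree R)"
    using c[of "\<i> * complex_of_real m1"] by (simp add: norm_mult y_def powr_realpow add_pos_nonneg)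
  have "cmod (poly_conv_integrand R a b m m1) = cmod (a (m - m1)) * cmod (poly R (\<i> * complex_of_real m1)) * cmod (b m1)"
    unfolding poly_conv_integrand_def by (simp add: norm_mult)
  also have "\<dots> \<le> (normE \<beta> \<mu> a * (x powr (-\<mu>) * exp (- \<beta> * \<bar>m - m1\<bar>))) * (c * y powr real (degree R))
        * (normE \<beta> \<mu> b * (y powr (-\<mu>) * exp (- \<beta> * \<bar>m1\<bar>)))"
    by (intro mult_mono A B p) (simp_all add: na nb c0)
  also have "\<dots> = normE \<beta> \<mu> a * normE \<beta> \<mu> b * c * (exp (- \<beta> * \<bar>m - m1\<bar>) * exp (- \<beta> * \<bar>m1\<bar>))
        * (x powr (-\<mu>) * (y powr real (degree R) * y powr (-\<mu>)))"
    by (simp add: algebra_simps)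
  also have "y powr real (degree R) * y powr (-\<mu>) = y powr (-s)"
    unfolding s_def by (simp add: powr_add[symmetric])
  also have "exp (- \<beta> * \<bar>m - m1\<bar>) * exp (- \<beta> * \<bar>m1\<bar>) \<le> exp (- \<beta> * \<bar>m\<bar>)"
    by (rule exp_neg_mult_abs_triangle[OF \<beta>])
  then have "normE \<beta> \<mu> a * normE \<beta> \<mu> b * c * (exp (- \<beta> * \<bar>m - m1\<bar>) * exp (- \<beta> * \<bar>m1\<bar>)) * (x powr (-\<mu>) * y powr (-s))
      \<le> normE \<beta> \<mu> a * normE \<beta> \<mu> b * c * exp (- \<beta> * \<bar>m\<bar>) * (x powr (-\<mu>) * y powr (-s))"
    by (intro mult_right_mono mult_left_mono) (simp_all add: na nb c0)
  also have "x powr (-\<mu>) * y powr (-s) \<le> 2 powr s * z powr (-s) * (y powr (-s) + x powr (-\<mu>))"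
    by (rule powr_neg_mult_le_split) (use s in \<open>auto simp: x_def y_def z_def\<close>)
  then have "normE \<beta> \<mu> a * normE \<beta> \<mu> b * c * exp (- \<beta> * \<bar>m\<bar>) * (x powr (-\<mu>) * y powr (-s))
     \<le> normE \<beta> \<mu> a * normE \<beta> \<mu> b * c * exp (- \<beta> * \<bar>m\<bar>) * (2 powr s * z powr (-s) * (y powr (-s) + x powr (-\<mu>)))"
    by (intro mult_left_mono) (simp_all add: na nb c0)
  finally show ?thesis unfolding s_def x_def y_def z_def by (simp add: algebra_simps)
qed

lemma norm_poly_conv_le:
  assumes \<beta>: "\<beta> \<ge> 0" and \<mu>: "\<mu> > real (degree R) + 1"
  obtains K where "K \<ge> 0" and "\<And>a b m. a \<in> E_space \<beta> \<mu> \<Longrightarrow> b \<in> E_space \<beta> \<mu> \<Longrightarrow>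
     cmod (poly_conv R a b m) \<le> K * normE \<beta> \<mu> a * normE \<beta> \<mu> b * exp (- \<beta> * \<bar>m\<bar>) * (1 + \<bar>m\<bar>) powr (-(\<mu> - real (degree R)))"
proof -
  obtain c where c0: "c \<ge> 0" and c: "\<And>z. cmod (poly R z) \<le> c * (1 + cmod z) ^ degree R"
    using norm_poly_le_pow[of R] by blast
  define s where "s = \<mu> - real (degree R)"
  have s1: "s > 1" "\<mu> > 1" using \<mu> unfolding s_def by auto
  define J where "J = (\<lambda>t. integral\<^sup>L lebesgue (\<lambda>x::real. (1 + \<bar>x\<bar>) powr (-t)))"
  have J0: "J t \<ge> 0" for t unfolding J_def by (rule integral_nonneg_AE) simp
  define K where "K = c * 2 powr s * (J s + J \<mu>)"
  have K0: "K \<ge> 0" unfolding K_def using c0 J0 by simp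
  show ?thesis
  proof (rule that[OF K0])
    fix a b m assume a: "a \<in> E_space \<beta> \<mu>" and b: "b \<in> E_space \<beta> \<mu>"
    define C where "C = normE \<beta> \<mu> a * normE \<beta> \<mu> b * c * exp (- \<beta> * \<bar>m\<bar>) * 2 powr s * (1 + \<bar>m\<bar>) powr (-s)"
    define g where "g = (\<lambda>m1. C * ((1 + \<bar>m1\<bar>) powr (-s) + (1 + \<bar>m - m1\<bar>) powr (-\<mu>)))"
    have i1: "integrable lebesgue (\<lambda>x::real. (1 + \<bar>x\<bar>) powr (-s))" by (rule integrable_one_plus_abs_powr[OF s1(1)])
    have i2: "integrable lebesgue (\<lambda>x::real. (1 + \<bar>m - x\<bar>) powr (-\<mu>))" by (rule one_plus_abs_diff_powr(1)[OF s1(2)])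
    have ig: "integrable lebesgue g" unfolding g_def
      by (intro Bochner_Integration.integrable_mult_right Bochner_Integration.integrable_add i1 i2)
    have "cmod (poly_conv R a b m) \<le> integral\<^sup>L lebesgue g"
      unfolding poly_conv_def
    proof (rule Bochner_Integration.integral_norm_bound_integral[OF integrable_poly_conv_integrand[OF a b \<beta> \<mu>] ig])
      fix x show "norm (poly_conv_integrand R a b m x) \<le> g x"
        using norm_poly_conv_integrand_le_split[OF a b \<beta> \<mu> c0 c, of m x] unfolding g_def C_def s_def by (simp add: algebra_simps)
    qed
    also have "integral\<^sup>L lebesgue g = C * (J s + J \<mu>)"
      unfolding g_def J_def using i1 i2 one_plus_abs_diff_powr(2)[OF s1(2), of m] by simp
    also have "\<dots> = K * normE \<beta> \<mu> a * normE \<beta> \<mu> b * exp (- \<beta> * \<bar>m\<bar>) * (1 + \<bar>m\<bar>) powr (-(\<mu> - real (degree R)))"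
      unfolding C_def K_def s_def by (simp add: algebra_simps)
    finally show "cmod (poly_conv R a b m) \<le> K * normE \<beta> \<mu> a * normE \<beta> \<mu> b * exp (- \<beta> * \<bar>m\<bar>) * (1 + \<bar>m\<bar>) powr (-(\<mu> - real (degree R)))" .
  qed
qed

definition poly_conv_div :: "complex poly \<Rightarrow> complex poly \<Rightarrow> (real \<Rightarrow> complex) \<Rightarrow> (real \<Rightarrow> complex) \<Rightarrow> real \<Rightarrow> complex" where
  "poly_conv_div R Q a b = (\<lambda>m. poly_conv R a b m / poly Q (\<i> * complex_of_real m))"

lemma poly_conv_linear_left:
  assumes a1: "a1 \<in> E_space \<beta> \<mu>" and a2: "a2 \<in> E_space \<beta> \<mu>" and b: "b \<in> E_space \<beta> \<mu>"
    and \<beta>: "\<beta> \<ge> 0" and \<mu>: "\<mu> > real (degree R) + 1"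
  shows "poly_conv R (\<lambda>m. x * a1 m + y * a2 m) b m = x * poly_conv R a1 b m + y * poly_conv R a2 b m"
proof -
  have "poly_conv_integrand R (\<lambda>m. x * a1 m + y * a2 m) b m = (\<lambda>m1. x * poly_conv_integrand R a1 b m m1 + y * poly_conv_integrand R a2 b m m1)"
    unfolding poly_conv_integrand_def by (simp add: algebra_simps)
  then show ?thesis unfolding poly_conv_def
    using integrable_poly_conv_integrand[OF a1 b \<beta> \<mu>, of m] integrable_poly_conv_integrand[OF a2 b \<beta> \<mu>, of m] by simp
qed

lemma poly_conv_linear_right:
  assumes a: "a \<in> E_space \<beta> \<mu>" and b1: "b1 \<in> E_space \<beta> \<mu>" and b2: "b2 \<in> E_space \<beta> \<mu>"
    and \<beta>: "\<beta> \<ge> 0" and \<mu>: "\<mu> > real (degree R) + 1"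
  shows "poly_conv R a (\<lambda>m. x * b1 m + y * b2 m) m = x * poly_conv R a b1 m + y * poly_conv R a b2 m"
proof -
  have "poly_conv_integrand R a (\<lambda>m. x * b1 m + y * b2 m) m = (\<lambda>m1. x * poly_conv_integrand R a b1 m m1 + y * poly_conv_integrand R a b2 m m1)"
    unfolding poly_conv_integrand_def by (simp add: algebra_simps)
  then show ?thesis unfolding poly_conv_def
    using integrable_poly_conv_integrand[OF a b1 \<beta> \<mu>, of m] integrable_poly_conv_integrand[OF a b2 \<beta> \<mu>, of m] by simp
qed

lemma weighted_norm_poly_conv_le:
  assumes \<beta>: "\<beta> \<ge> 0" and \<mu>: "\<mu> > real (degree R) + 1"
  obtains K where "K \<ge> 0" and "\<And>a b m. a \<in> E_space \<beta> \<mu> \<Longrightarrow> b \<in> E_space \<beta> \<mu> \<Longrightarrow>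
     E_weight \<beta> \<mu> m * cmod (poly_conv R a b m) \<le> K * normE \<beta> \<mu> a * normE \<beta> \<mu> b * (1 + \<bar>m\<bar>) ^ degree R"
proof -
  obtain K where K0: "K \<ge> 0" and K: "\<And>a b m. a \<in> E_space \<beta> \<mu> \<Longrightarrow> b \<in> E_space \<beta> \<mu> \<Longrightarrow>
     cmod (poly_conv R a b m) \<le> K * normE \<beta> \<mu> a * normE \<beta> \<mu> b * exp (- \<beta> * \<bar>m\<bar>) * (1 + \<bar>m\<bar>) powr (-(\<mu> - real (degree R)))"
    by (rule norm_poly_conv_le[OF \<beta> \<mu>]) blast
  have "E_weight \<beta> \<mu> m * cmod (poly_conv R a b m) \<le> K * normE \<beta> \<mu> a * normE \<beta> \<mu> b * (1 + \<bar>m\<bar>) ^ degree R"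
    if a: "a \<in> E_space \<beta> \<mu>" and b: "b \<in> E_space \<beta> \<mu>" for a b m
  proof -
    define z where "z = 1 + \<bar>m\<bar>"
    have z: "z > 0" unfolding z_def by (simp add: add_pos_nonneg)
    have "E_weight \<beta> \<mu> m * cmod (poly_conv R a b m)
        \<le> E_weight \<beta> \<mu> m * (K * normE \<beta> \<mu> a * normE \<beta> \<mu> b * exp (- \<beta> * \<bar>m\<bar>) * z powr (-(\<mu> - real (degree R))))"
      unfolding z_def by (rule mult_left_mono[OF K[OF a b] less_imp_le[OF E_weight_pos]])
    also have "\<dots> = K * normE \<beta> \<mu> a * normE \<beta> \<mu> b * (z powr \<mu> * z powr (-(\<mu> - real (degree R))))
        * (exp (\<beta> * \<bar>m\<bar>) * exp (- \<beta> * \<bar>m\<bar>))"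
      unfolding E_weight_def z_def by (simp add: algebra_simps)
    also have "z powr \<mu> * z powr (-(\<mu> - real (degree R))) = z ^ degree R"
      using z by (simp add: powr_add[symmetric] powr_realpow)
    also have "exp (\<beta> * \<bar>m\<bar>) * exp (- \<beta> * \<bar>m\<bar>) = 1" by (simp add: exp_add[symmetric])
    finally show ?thesis by (simp add: z_def)
  qed
  with K0 show ?thesis by (rule that)
qed

lemma poly_conv_div_bounded:
  assumes \<beta>: "\<beta> \<ge> 0" and \<mu>: "\<mu> > real (degree R) + 1" and dQ: "degree R \<le> degree Q"
    and Q: "\<And>m::real. poly Q (\<i> * complex_of_real m) \<noteq> 0"
  obtains K where "K \<ge> 0" and "\<And>a b. a \<in> E_space \<beta> \<mu> \<Longrightarrow> b \<in> E_space \<beta> \<mu> \<Longrightarrow>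
      poly_conv_div R Q a b \<in> E_space \<beta> \<mu> \<and> normE \<beta> \<mu> (poly_conv_div R Q a b) \<le> K * normE \<beta> \<mu> a * normE \<beta> \<mu> b"
proof -
  obtain K where K0: "K \<ge> 0" and K: "\<And>a b m. a \<in> E_space \<beta> \<mu> \<Longrightarrow> b \<in> E_space \<beta> \<mu> \<Longrightarrow>
     E_weight \<beta> \<mu> m * cmod (poly_conv R a b m) \<le> K * normE \<beta> \<mu> a * normE \<beta> \<mu> b * (1 + \<bar>m\<bar>) ^ degree R"
    using weighted_norm_poly_conv_le[OF \<beta> \<mu>] by blast
  obtain c where c: "c > 0" and cQ: "\<And>m::real. c * (1 + \<bar>m\<bar>) ^ degree R \<le> cmod (poly Q (\<i> * of_real m))"
    using poly_imag_axis_lower_bound[OF dQ Q] by blast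
  have bound: "poly_conv_div R Q a b \<in> E_space \<beta> \<mu> \<and> normE \<beta> \<mu> (poly_conv_div R Q a b) \<le> K / c * normE \<beta> \<mu> a * normE \<beta> \<mu> b"
    if a: "a \<in> E_space \<beta> \<mu>" and b: "b \<in> E_space \<beta> \<mu>" for a b
  proof -
    have weighted: "E_weight \<beta> \<mu> m * cmod (poly_conv_div R Q a b m) \<le> K / c * normE \<beta> \<mu> a * normE \<beta> \<mu> b" for m
    proof -
      have nab: "0 \<le> K * normE \<beta> \<mu> a * normE \<beta> \<mu> b"
        using K0 normE_nonneg[OF a] normE_nonneg[OF b] by simp
      have Qm: "cmod (poly Q (\<i> * of_real m)) > 0" using Q[of m] by simp
      have "E_weight \<beta> \<mu> m * cmod (poly_conv_div R Q a b m)
          = E_weight \<beta> \<mu> m * cmod (poly_conv R a b m) / cmod (poly Q (\<i> * of_real m))"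
        unfolding poly_conv_div_def by (simp add: norm_divide)
      also have "\<dots> \<le> K * normE \<beta> \<mu> a * normE \<beta> \<mu> b * (1 + \<bar>m\<bar>) ^ degree R / cmod (poly Q (\<i> * of_real m))"
        by (rule divide_right_mono[OF K[OF a b]]) simp
      also have "\<dots> \<le> K * normE \<beta> \<mu> a * normE \<beta> \<mu> b * (1 + \<bar>m\<bar>) ^ degree R / (c * (1 + \<bar>m\<bar>) ^ degree R)"
        by (rule divide_left_mono[OF cQ[of m]]) (use nab c Qm in \<open>simp_all add: add_pos_nonneg\<close>)
      also have "\<dots> = K / c * normE \<beta> \<mu> a * normE \<beta> \<mu> b"
        by (simp add: add_pos_nonneg)
      finally show ?thesis .
    qed
    have "continuous_on UNIV (poly_conv_div R Q a b)"
      unfolding poly_conv_div_def using continuous_on_poly_conv[OF a b \<beta> \<mu>] Q by (intro continuous_intros) auto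
    then show ?thesis using E_spaceI[OF _ weighted] normE_least[OF weighted] by blast
  qed
  show ?thesis
  proof (rule that)
    show "K / c \<ge> 0" using K0 c by simp
  qed (rule bound)
qed

lemma holo_E_poly_conv_div:
  assumes \<beta>: "\<beta> \<ge> 0" and \<mu>: "\<mu> > real (degree R) + 1" and dQ: "degree R \<le> degree Q"
    and Q: "\<And>m::real. poly Q (\<i> * complex_of_real m) \<noteq> 0"
    and f: "holo_E \<beta> \<mu> S f" and g: "holo_E \<beta> \<mu> S g" and S: "open S"
  shows "holo_E \<beta> \<mu> S (\<lambda>\<epsilon>. poly_conv_div R Q (f \<epsilon>) (g \<epsilon>))"
proof -
  obtain K where K0: "K \<ge> 0" and K: "\<And>a b. a \<in> E_space \<beta> \<mu> \<Longrightarrow> b \<in> E_space \<beta> \<mu> \<Longrightarrow>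
      poly_conv_div R Q a b \<in> E_space \<beta> \<mu> \<and> normE \<beta> \<mu> (poly_conv_div R Q a b) \<le> K * normE \<beta> \<mu> a * normE \<beta> \<mu> b"
    by (rule poly_conv_div_bounded[OF \<beta> \<mu> dQ Q]) blast
  interpret E_bilinear \<beta> \<mu> K "poly_conv_div R Q"
  proof
    show "\<And>a b. a \<in> E_space \<beta> \<mu> \<Longrightarrow> b \<in> E_space \<beta> \<mu> \<Longrightarrow> poly_conv_div R Q a b \<in> E_space \<beta> \<mu>" using K by blast
    show "\<And>a b. a \<in> E_space \<beta> \<mu> \<Longrightarrow> b \<in> E_space \<beta> \<mu> \<Longrightarrow> normE \<beta> \<mu> (poly_conv_div R Q a b) \<le> K * normE \<beta> \<mu> a * normE \<beta> \<mu> b" using K by blast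
    show "poly_conv_div R Q (\<lambda>m. x * a1 m + y * a2 m) b = (\<lambda>m. x * poly_conv_div R Q a1 b m + y * poly_conv_div R Q a2 b m)"
      if "a1 \<in> E_space \<beta> \<mu>" "a2 \<in> E_space \<beta> \<mu>" "b \<in> E_space \<beta> \<mu>" for a1 a2 b x y
      unfolding poly_conv_div_def using poly_conv_linear_left[OF that \<beta> \<mu>] by (simp add: add_divide_distrib)
    show "poly_conv_div R Q a (\<lambda>m. x * b1 m + y * b2 m) = (\<lambda>m. x * poly_conv_div R Q a b1 m + y * poly_conv_div R Q a b2 m)"
      if "a \<in> E_space \<beta> \<mu>" "b1 \<in> E_space \<beta> \<mu>" "b2 \<in> E_space \<beta> \<mu>" for a b1 b2 x y
      unfolding poly_conv_div_def using poly_conv_linear_right[OF that \<beta> \<mu>] by (simp add: add_divide_distrib)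
    show "K \<ge> 0" by (rule K0)
  qed
  show ?thesis by (rule holo_E_B[OF f g S])
qed



lemma fs_conv_eq_sum_poly_conv:
  assumes Cs: "\<And>j. j \<le> N \<Longrightarrow> Cs j \<in> E_space \<beta> \<mu>" and X: "\<And>j. j \<le> N \<Longrightarrow> X j \<in> E_space \<beta> \<mu>"
    and \<beta>: "\<beta> \<ge> 0" and \<mu>: "\<mu> > real (degree R) + 1"
  shows "fs_conv Cs R X N m = complex_of_real (1 / sqrt (2 * pi)) * (\<Sum>j\<le>N. poly_conv R (Cs j) (X (N - j)) m)"
proof -
  have ii: "integrable lebesgue (poly_conv_integrand R (Cs j) (X (N - j)) m)" if "j \<in> {..N}" for j
    using that by (intro integrable_poly_conv_integrand[OF Cs X \<beta> \<mu>]) auto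
  have "integral UNIV (\<lambda>m1. \<Sum>j\<le>N. Cs j (m - m1) * poly R (\<i> * complex_of_real m1) * X (N - j) m1)
      = integral UNIV (\<lambda>m1. \<Sum>j\<le>N. poly_conv_integrand R (Cs j) (X (N - j)) m m1)"
    unfolding poly_conv_integrand_def by simp
  also have "\<dots> = (\<Sum>j\<le>N. integral UNIV (poly_conv_integrand R (Cs j) (X (N - j)) m))"
    by (rule integral_sum) (use ii integrable_on_lebesgue in auto)
  also have "\<dots> = (\<Sum>j\<le>N. poly_conv R (Cs j) (X (N - j)) m)"
  proof (rule sum.cong[OF refl])
    fix j assume "j \<in> {..N}"
    then show "integral UNIV (poly_conv_integrand R (Cs j) (X (N - j)) m) = poly_conv R (Cs j) (X (N - j)) m"
      unfolding poly_conv_def using has_integral_integral_lebesgue[OF ii] by (simp add: integral_unique)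
  qed
  finally show ?thesis unfolding fs_conv_def by simp
qed

lemma holo_E_fs_shift_polymul_div:
  assumes dP: "degree P \<le> degree Q" and Q: "\<And>m::real. poly Q (\<i> * complex_of_real m) \<noteq> 0"
    and S: "open S" and U: "d \<le> n \<Longrightarrow> holo_E \<beta> \<mu> S (\<lambda>\<epsilon> m. U (n - d) m \<epsilon>)"
  shows "holo_E \<beta> \<mu> S (\<lambda>\<epsilon> m. fs_shift d (fs_polymul P (fs_dil c (\<lambda>n m. U n m \<epsilon>))) n m
           / (poly Q (\<i> * complex_of_real m) * complex_of_real (q ^ n)))"
proof (cases "d \<le> n")
  case True
  define \<phi> where "\<phi> = (\<lambda>m::real. poly P (\<i> * complex_of_real m) / poly Q (\<i> * complex_of_real m) * (complex_of_real (c ^ (n - d)) / complex_of_real (q ^ n)))"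
  obtain K where K: "\<And>m::real. cmod (poly P (\<i> * complex_of_real m) / poly Q (\<i> * complex_of_real m)) \<le> K"
    using poly_div_imag_axis_bounded[OF dP Q] by blast
  have cont: "continuous_on UNIV \<phi>" unfolding \<phi>_def using Q by (intro continuous_intros) auto
  have bnd: "cmod (\<phi> m) \<le> K * cmod (complex_of_real (c ^ (n - d)) / complex_of_real (q ^ n))" for m
    unfolding \<phi>_def norm_mult by (rule mult_right_mono[OF K]) simp
  have "holo_E \<beta> \<mu> S (\<lambda>\<epsilon> m. \<phi> m * U (n - d) m \<epsilon>)"
    by (rule holo_E_mult[OF U[OF True] S cont bnd])
  then show ?thesis
    by (rule holo_E_cong[OF _ S]) (simp add: True \<phi>_def fs_shift_def fs_polymul_def fs_dil_def divide_inverse inverse_mult_distrib mult_ac)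
next
  case False
  then show ?thesis
    using holo_E_zero by (simp add: fs_shift_def)
qed

lemma holo_E_fs_dil_div:
  assumes Q: "\<And>m::real. poly Q (\<i> * complex_of_real m) \<noteq> 0" and q: "q \<noteq> 0"
    and S: "open S" and F: "holo_E \<beta> \<mu> S (\<lambda>\<epsilon> m. F n m \<epsilon>)"
  shows "holo_E \<beta> \<mu> S (\<lambda>\<epsilon> m. fs_dil q (\<lambda>n m. F n m \<epsilon>) n m
           / (poly Q (\<i> * complex_of_real m) * complex_of_real (q ^ n)))"
proof -
  define \<phi> where "\<phi> = (\<lambda>m::real. poly 1 (\<i> * complex_of_real m) / poly Q (\<i> * complex_of_real m))"
  obtain K where K: "\<And>m::real. cmod (poly 1 (\<i> * complex_of_real m) / poly Q (\<i> * complex_of_real m)) \<le> K"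
    using poly_div_imag_axis_bounded[of 1 Q] Q by auto
  have cont: "continuous_on UNIV \<phi>" unfolding \<phi>_def using Q by (intro continuous_intros) auto
  have "holo_E \<beta> \<mu> S (\<lambda>\<epsilon> m. \<phi> m * F n m \<epsilon>)"
    by (rule holo_E_mult[OF F S cont]) (use K in \<open>simp add: \<phi>_def\<close>)
  then show ?thesis
    by (rule holo_E_cong[OF _ S]) (use q in \<open>simp add: \<phi>_def fs_dil_def\<close>)
qed

lemma holo_E_fs_conv_div:
  assumes \<beta>: "\<beta> \<ge> 0" and \<mu>: "\<mu> > real (degree R) + 1" and dQ: "degree R \<le> degree Q"
    and Q: "\<And>m::real. poly Q (\<i> * complex_of_real m) \<noteq> 0" and q: "q \<noteq> 0" and S: "open S"
    and C: "\<And>j. holo_E \<beta> \<mu> S (\<lambda>\<epsilon> m. C j m \<epsilon>)"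
    and U: "\<And>k. d \<le> n \<Longrightarrow> k \<le> n - d \<Longrightarrow> holo_E \<beta> \<mu> S (\<lambda>\<epsilon> m. U k m \<epsilon>)"
  shows "holo_E \<beta> \<mu> S (\<lambda>\<epsilon> m. \<epsilon> ^ e * fs_shift d (fs_dil c (fs_conv (\<lambda>j m. C j m \<epsilon>) R (\<lambda>n m. U n m \<epsilon>))) n m
           / (poly Q (\<i> * complex_of_real m) * complex_of_real (q ^ n)))"
proof (cases "d \<le> n")
  case True
  define N where "N = n - d"
  define K where "K = complex_of_real (c ^ N) * complex_of_real (1 / sqrt (2 * pi)) / complex_of_real (q ^ n)"
  have UN: "k \<le> N \<Longrightarrow> holo_E \<beta> \<mu> S (\<lambda>\<epsilon> m. U k m \<epsilon>)" for k using U[OF True] unfolding N_def by simp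
  have "holo_E \<beta> \<mu> S (\<lambda>\<epsilon> m. \<Sum>j\<le>N. poly_conv_div R Q (\<lambda>m. C j m \<epsilon>) (\<lambda>m. U (N - j) m \<epsilon>) m)"
    using holo_E_poly_conv_div[OF \<beta> \<mu> dQ Q C UN S] by (intro holo_E_sum[OF _ _ S]) auto
  then have holo: "holo_E \<beta> \<mu> S (\<lambda>\<epsilon> m. (\<epsilon> ^ e * K) * (\<Sum>j\<le>N. poly_conv_div R Q (\<lambda>m. C j m \<epsilon>) (\<lambda>m. U (N - j) m \<epsilon>) m))"
    by (rule holo_E_scalar_mult[OF _ S]) (rule derivative_eq_intros | simp)+
  show ?thesis
  proof (rule holo_E_cong[OF holo S])
    fix \<epsilon> m assume e: "\<epsilon> \<in> S"
    have "fs_conv (\<lambda>j m. C j m \<epsilon>) R (\<lambda>n m. U n m \<epsilon>) N m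
        = complex_of_real (1 / sqrt (2 * pi)) * (\<Sum>j\<le>N. poly_conv R (\<lambda>m. C j m \<epsilon>) (\<lambda>m. U (N - j) m \<epsilon>) m)"
      using holo_E_E_space[OF C e] holo_E_E_space[OF UN e] \<beta> \<mu> by (intro fs_conv_eq_sum_poly_conv) auto
    then show "\<epsilon> ^ e * K * (\<Sum>j\<le>N. poly_conv_div R Q (\<lambda>m. C j m \<epsilon>) (\<lambda>m. U (N - j) m \<epsilon>) m)
        = \<epsilon> ^ e * fs_shift d (fs_dil c (fs_conv (\<lambda>j m. C j m \<epsilon>) R (\<lambda>n m. U n m \<epsilon>))) n m
          / (poly Q (\<i> * complex_of_real m) * complex_of_real (q ^ n))"
      using True Q[of m] q
      by (simp add: fs_shift_def fs_dil_def poly_conv_div_def K_def N_def[symmetric] sum_divide_distrib[symmetric] field_simps)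
  qed
next
  case False
  then show ?thesis
    using holo_E_zero by (simp add: fs_shift_def)
qed

lemma fs_shift_causal:
  assumes "\<And>k. k < n \<Longrightarrow> X k = Y k" "1 \<le> d"
  shows "fs_shift d X n = fs_shift d Y n"
proof (cases "d \<le> n")
  case True
  then have "n - d < n" using assms(2) by simp
  then show ?thesis using assms(1) by (simp add: fs_shift_def fun_eq_iff)
qed (simp add: fs_shift_def fun_eq_iff)

lemma fs_conv_causal:
  assumes "\<And>k. k < n \<Longrightarrow> X k = Y k" "N < n"
  shows "fs_conv Cs R X N = fs_conv Cs R Y N"
proof -
  have "X (N - j) = Y (N - j)" for j using assms by simp
  then show ?thesis unfolding fs_conv_def by simp
qed


text \<open>The value \<open>z\<close> only fills the indices \<open>\<ge> n\<close> in the argument of \<open>\<Phi> _ n\<close>; for a causal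
  \<open>\<Phi>\<close> it is never inspected.\<close>

function causal_fix :: "((nat \<Rightarrow> 'a) \<Rightarrow> nat \<Rightarrow> 'a) \<Rightarrow> 'a \<Rightarrow> nat \<Rightarrow> 'a" where
  "causal_fix \<Phi> z n = \<Phi> (\<lambda>k. if k < n then causal_fix \<Phi> z k else z) n"
  by auto
termination by (relation "Wellfounded.measure (\<lambda>(_, _, n). n)") auto

lemma causal_fix_eq:
  assumes causal: "\<And>A B n. (\<And>k. k < n \<Longrightarrow> A k = B k) \<Longrightarrow> \<Phi> A n = \<Phi> B n"
  shows "causal_fix \<Phi> z n = \<Phi> (causal_fix \<Phi> z) n"
  by (subst causal_fix.simps) (rule causal, simp)

lemma causal_fix_unique:
  assumes causal: "\<And>A B n. (\<And>k. k < n \<Longrightarrow> A k = B k) \<Longrightarrow> \<Phi> A n = \<Phi> B n"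
    and V: "\<And>n. V n = \<Phi> V n"
  shows "V n = causal_fix \<Phi> z n"
proof (induction n rule: less_induct)
  case (less n)
  have "V n = \<Phi> V n" by (rule V)
  also have "\<dots> = \<Phi> (causal_fix \<Phi> z) n" by (rule causal) (rule less)
  also have "\<dots> = causal_fix \<Phi> z n" by (rule causal_fix_eq[OF causal, symmetric])
  finally show ?case .
qed

locale q_difference_convolution_equation =
  fixes q :: real and k1 k2 D dD1 dD2 :: nat and Q RD1 RD2 :: "complex poly"
    and R :: "nat \<Rightarrow> complex poly" and d \<delta> \<Delta> :: "nat \<Rightarrow> nat"
    and C :: "nat \<Rightarrow> nat \<Rightarrow> real \<Rightarrow> complex \<Rightarrow> complex" and p1 :: nat
    and F :: "nat \<Rightarrow> real \<Rightarrow> complex \<Rightarrow> complex" and \<epsilon>0 :: real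
  assumes q_nonzero: "q \<noteq> 0"
    and dD_pos: "1 \<le> dD1" "1 \<le> dD2"
    and d_pos: "\<And>l. l \<in> {1..D-1} \<Longrightarrow> 1 \<le> d l"
    and Q_nonzero: "\<And>m::real. poly Q (\<i> * complex_of_real m) \<noteq> 0"
begin

definition eq_rhs :: "complex \<Rightarrow> fser \<Rightarrow> fser" where
  "eq_rhs \<epsilon> A n m =
      fs_shift dD1 (fs_polymul RD1 (fs_dil (q powr (real dD1 / real k1 + 1)) A)) n m
    + fs_shift dD2 (fs_polymul RD2 (fs_dil (q powr (real dD2 / real k2 + 1)) A)) n m
    + (\<Sum>l\<in>{1..D-1}. \<epsilon> ^ (\<Delta> l - d l) *
         fs_shift (d l) (fs_dil (q powr real (\<delta> l)) (fs_conv (\<lambda>j m. if j \<le> p1 then C l j m \<epsilon> else 0) (R l) A)) n m)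
    + fs_dil q (\<lambda>n m. F n m \<epsilon>) n m"

lemma solves_eq_iff:
  "solves_eq q k1 k2 D dD1 dD2 Q RD1 RD2 R d \<delta> \<Delta> C p1 F \<epsilon>0 U \<longleftrightarrow>
    (\<forall>\<epsilon>\<in>ball 0 \<epsilon>0. \<forall>n m. poly Q (\<i> * complex_of_real m) * complex_of_real (q ^ n) * U n m \<epsilon>
       = eq_rhs \<epsilon> (\<lambda>n m. U n m \<epsilon>) n m)"
  unfolding solves_eq_def eq_rhs_def fs_polymul_def fs_dil_def by (simp add: mult.assoc)

lemma eq_rhs_causal:
  assumes AB: "\<And>k. k < n \<Longrightarrow> A k = B k"
  shows "eq_rhs \<epsilon> A n = eq_rhs \<epsilon> B n"
proof -
  have polymul: "fs_shift e (fs_polymul P (fs_dil c A)) n = fs_shift e (fs_polymul P (fs_dil c B)) n"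
    if "1 \<le> e" for e P c
    by (rule fs_shift_causal[OF _ that]) (simp add: AB fs_polymul_def fs_dil_def fun_eq_iff)
  have conv: "fs_shift (d l) (fs_dil c (fs_conv Cs (R l) A)) n = fs_shift (d l) (fs_dil c (fs_conv Cs (R l) B)) n"
    if "l \<in> {1..D-1}" for l c Cs
  proof (rule fs_shift_causal[OF _ d_pos[OF that]])
    fix k assume "k < n"
    then show "fs_dil c (fs_conv Cs (R l) A) k = fs_dil c (fs_conv Cs (R l) B) k"
      using fs_conv_causal[OF AB] by (simp add: fs_dil_def fun_eq_iff)
  qed
  have "(\<Sum>l\<in>{1..D-1}. \<epsilon> ^ (\<Delta> l - d l) * fs_shift (d l) (fs_dil (q powr real (\<delta> l)) (fs_conv (Cs l) (R l) A)) n m)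
      = (\<Sum>l\<in>{1..D-1}. \<epsilon> ^ (\<Delta> l - d l) * fs_shift (d l) (fs_dil (q powr real (\<delta> l)) (fs_conv (Cs l) (R l) B)) n m)"
    for Cs m by (rule sum.cong[OF refl]) (simp add: conv)
  then show ?thesis
    unfolding eq_rhs_def fun_eq_iff using polymul[OF dD_pos(1)] polymul[OF dD_pos(2)] by simp
qed

definition recursion_step :: "complex \<Rightarrow> fser \<Rightarrow> nat \<Rightarrow> real \<Rightarrow> complex" where
  "recursion_step \<epsilon> A n = (\<lambda>m. eq_rhs \<epsilon> A n m / (poly Q (\<i> * complex_of_real m) * complex_of_real (q ^ n)))"

lemma recursion_step_causal: "(\<And>k. k < n \<Longrightarrow> A k = B k) \<Longrightarrow> recursion_step \<epsilon> A n = recursion_step \<epsilon> B n"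
  unfolding recursion_step_def by (subst eq_rhs_causal) auto

definition solution :: "nat \<Rightarrow> real \<Rightarrow> complex \<Rightarrow> complex" where
  "solution n m \<epsilon> = causal_fix (recursion_step \<epsilon>) (\<lambda>m. 0) n m"

lemma solution_recursion:
  "solution n m \<epsilon> = eq_rhs \<epsilon> (\<lambda>n m. solution n m \<epsilon>) n m / (poly Q (\<i> * complex_of_real m) * complex_of_real (q ^ n))"
proof -
  have "(\<lambda>n m. solution n m \<epsilon>) = causal_fix (recursion_step \<epsilon>) (\<lambda>m. 0)"
    by (simp add: solution_def fun_eq_iff)
  then show ?thesis
    using causal_fix_eq[of "recursion_step \<epsilon>" "\<lambda>m. 0" n, OF recursion_step_causal]
    by (simp add: recursion_step_def solution_def)
qed

lemma solves_eq_solution: "solves_eq q k1 k2 D dD1 dD2 Q RD1 RD2 R d \<delta> \<Delta> C p1 F \<epsilon>0 solution"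
  unfolding solves_eq_iff
proof (intro ballI allI)
  fix \<epsilon> n m
  have "poly Q (\<i> * complex_of_real m) * complex_of_real (q ^ n) \<noteq> 0"
    using Q_nonzero q_nonzero by simp
  then show "poly Q (\<i> * complex_of_real m) * complex_of_real (q ^ n) * solution n m \<epsilon>
      = eq_rhs \<epsilon> (\<lambda>n m. solution n m \<epsilon>) n m"
    by (subst solution_recursion) simp
qed

lemma solution_unique:
  assumes V: "solves_eq q k1 k2 D dD1 dD2 Q RD1 RD2 R d \<delta> \<Delta> C p1 F \<epsilon>0 V" and \<epsilon>: "\<epsilon> \<in> ball 0 \<epsilon>0"
  shows "V n m \<epsilon> = solution n m \<epsilon>"
proof -
  have "(\<lambda>m. V n m \<epsilon>) = recursion_step \<epsilon> (\<lambda>n m. V n m \<epsilon>) n" for n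
  proof
    fix m
    have "poly Q (\<i> * complex_of_real m) * complex_of_real (q ^ n) \<noteq> 0"
      using Q_nonzero q_nonzero by simp
    moreover have "poly Q (\<i> * complex_of_real m) * complex_of_real (q ^ n) * V n m \<epsilon> = eq_rhs \<epsilon> (\<lambda>n m. V n m \<epsilon>) n m"
      using V \<epsilon> unfolding solves_eq_iff by blast
    ultimately show "V n m \<epsilon> = recursion_step \<epsilon> (\<lambda>n m. V n m \<epsilon>) n m"
      unfolding recursion_step_def by (simp add: eq_divide_eq mult.commute)
  qed
  then have "(\<lambda>m. V n m \<epsilon>) = causal_fix (recursion_step \<epsilon>) (\<lambda>m. 0) n"
    using causal_fix_unique[of "recursion_step \<epsilon>" "\<lambda>n m. V n m \<epsilon>"] recursion_step_causal by blast
  then show ?thesis unfolding solution_def by (simp add: fun_eq_iff)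
qed

end


locale q_difference_convolution_equation_E = q_difference_convolution_equation +
  fixes \<beta> \<mu> :: real
  assumes \<beta>_nonneg: "\<beta> \<ge> 0"
    and degree_RD: "degree RD1 \<le> degree Q" "degree RD2 \<le> degree Q"
    and degree_R: "\<And>l. l \<in> {1..D-1} \<Longrightarrow> degree (R l) \<le> degree Q"
    and \<mu>_large: "\<And>l. l \<in> {1..D-1} \<Longrightarrow> \<mu> > real (degree (R l)) + 1"
    and holo_E_F: "\<And>n. holo_E \<beta> \<mu> (ball 0 \<epsilon>0) (\<lambda>\<epsilon> m. F n m \<epsilon>)"
    and holo_E_C: "\<And>l j. l \<in> {1..D-1} \<Longrightarrow> j \<le> p1 \<Longrightarrow> holo_E \<beta> \<mu> (ball 0 \<epsilon>0) (\<lambda>\<epsilon> m. C l j m \<epsilon>)"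
begin

lemma holo_E_solution: "holo_E \<beta> \<mu> (ball 0 \<epsilon>0) (\<lambda>\<epsilon> m. solution n m \<epsilon>)"
proof (induction n rule: less_induct)
  case (less n)
  have S: "open (ball (0::complex) \<epsilon>0)" by simp
  let ?D = "\<lambda>m. poly Q (\<i> * complex_of_real m) * complex_of_real (q ^ n)"
  have shift1: "holo_E \<beta> \<mu> (ball 0 \<epsilon>0) (\<lambda>\<epsilon> m. fs_shift dD1 (fs_polymul RD1
      (fs_dil (q powr (real dD1 / real k1 + 1)) (\<lambda>n m. solution n m \<epsilon>))) n m / ?D m)"
    using dD_pos by (intro holo_E_fs_shift_polymul_div[OF degree_RD(1) Q_nonzero S] less) simp
  have shift2: "holo_E \<beta> \<mu> (ball 0 \<epsilon>0) (\<lambda>\<epsilon> m. fs_shift dD2 (fs_polymul RD2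
      (fs_dil (q powr (real dD2 / real k2 + 1)) (\<lambda>n m. solution n m \<epsilon>))) n m / ?D m)"
    using dD_pos by (intro holo_E_fs_shift_polymul_div[OF degree_RD(2) Q_nonzero S] less) simp
  have conv: "holo_E \<beta> \<mu> (ball 0 \<epsilon>0) (\<lambda>\<epsilon> m. \<Sum>l\<in>{1..D-1}. \<epsilon> ^ (\<Delta> l - d l) *
      fs_shift (d l) (fs_dil (q powr real (\<delta> l)) (fs_conv (\<lambda>j m. if j \<le> p1 then C l j m \<epsilon> else 0) (R l)
        (\<lambda>n m. solution n m \<epsilon>))) n m / ?D m)"
  proof (rule holo_E_sum[OF _ _ S])
    fix l assume l: "l \<in> {1..D-1}"
    have C: "holo_E \<beta> \<mu> (ball 0 \<epsilon>0) (\<lambda>\<epsilon> m. if j \<le> p1 then C l j m \<epsilon> else 0)" for j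
      using holo_E_C[OF l] holo_E_zero by (cases "j \<le> p1") simp_all
    show "holo_E \<beta> \<mu> (ball 0 \<epsilon>0) (\<lambda>\<epsilon> m. \<epsilon> ^ (\<Delta> l - d l) * fs_shift (d l) (fs_dil (q powr real (\<delta> l))
        (fs_conv (\<lambda>j m. if j \<le> p1 then C l j m \<epsilon> else 0) (R l) (\<lambda>n m. solution n m \<epsilon>))) n m / ?D m)"
      using d_pos[OF l]
      by (intro holo_E_fs_conv_div[OF \<beta>_nonneg \<mu>_large[OF l] degree_R[OF l] Q_nonzero q_nonzero S C] less) simp
  qed simp
  have "holo_E \<beta> \<mu> (ball 0 \<epsilon>0) (\<lambda>\<epsilon> m. fs_dil q (\<lambda>n m. F n m \<epsilon>) n m / ?D m)"
    by (rule holo_E_fs_dil_div[OF Q_nonzero q_nonzero S holo_E_F])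
  then have "holo_E \<beta> \<mu> (ball 0 \<epsilon>0) (\<lambda>\<epsilon> m. eq_rhs \<epsilon> (\<lambda>n m. solution n m \<epsilon>) n m / ?D m)"
    using holo_E_add[OF holo_E_add[OF holo_E_add[OF shift1 shift2 S] conv S]]
    unfolding eq_rhs_def add_divide_distrib sum_divide_distrib by simp
  then show ?case
    by (rule holo_E_cong[OF _ S]) (rule solution_recursion[symmetric])
qed

end

theorem proposition9:
  fixes q :: real and k1 k2 :: nat and \<kappa> :: real
    and D D1 D2 dD1 dD2 :: nat and d \<delta> \<Delta> :: "nat \<Rightarrow> nat"
    and Q RD1 RD2 :: "complex poly" and R :: "nat \<Rightarrow> complex poly"
    and \<beta> \<mu> \<epsilon>0 CF T0 :: real
    and F :: "nat \<Rightarrow> real \<Rightarrow> complex \<Rightarrow> complex"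
    and C :: "nat \<Rightarrow> nat \<Rightarrow> real \<Rightarrow> complex \<Rightarrow> complex" and p1 :: nat
  assumes hq: "q > 1"
    and hk: "1 \<le> k1" "k1 < k2"
    and h\<kappa>: "1 / \<kappa> = 1 / real k1 - 1 / real k2"
    and hD: "D \<ge> 3" "D1 \<ge> 3" "D2 \<ge> 3"
    and hdD: "dD1 \<ge> 1" "dD2 \<ge> 1"
    and hd: "\<And>l. 1 \<le> l \<Longrightarrow> l \<le> D - 1 \<Longrightarrow> d l \<ge> 1 \<and> \<delta> l \<ge> 1"
    and h\<delta>1: "\<delta> 1 = 1"
    and h\<delta>mono: "\<And>l. 1 \<le> l \<Longrightarrow> l \<le> D - 2 \<Longrightarrow> \<delta> l < \<delta> (l + 1)"
    and h\<Delta>: "\<And>l. 1 \<le> l \<Longrightarrow> l \<le> D - 1 \<Longrightarrow> \<Delta> l \<ge> d l"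
    and hc1: "\<And>l. 1 \<le> l \<Longrightarrow> l \<le> D - 1 \<Longrightarrow> real (d l) / real k2 + 1 \<ge> real (\<delta> l)"
    and hc2: "\<And>l. 1 \<le> l \<Longrightarrow> l \<le> D - 1 \<Longrightarrow>
                (real dD1 - 1) / \<kappa> - real (d l) / real k2 \<ge> real (\<delta> l) - 1"
    and hc3: "\<And>l. 1 \<le> l \<Longrightarrow> l \<le> D - 1 \<Longrightarrow> (real dD2 - 1) / real k2 \<ge> real (\<delta> l) - 1"
    and hk12: "k1 * dD2 > k2 * dD1"
    and hdeg: "degree RD1 = degree RD2"
    and hdegQ: "degree Q \<ge> degree RD1"
    and hdegR: "\<And>l. 1 \<le> l \<Longrightarrow> l \<le> D - 1 \<Longrightarrow> degree RD1 \<ge> degree (R l)"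
    and hQ: "\<And>m::real. poly Q (\<i> * complex_of_real m) \<noteq> 0"
    and hRD1: "\<And>m::real. poly RD1 (\<i> * complex_of_real m) \<noteq> 0"
    and hRD2: "\<And>m::real. poly RD2 (\<i> * complex_of_real m) \<noteq> 0"
    and h\<beta>: "\<beta> > 0"
    and h\<mu>: "\<mu> > real (degree RD1) + 1"
    and h\<epsilon>0: "\<epsilon>0 > 0"
    and hFhol: "\<And>n. holo_E \<beta> \<mu> (ball 0 \<epsilon>0) (\<lambda>\<epsilon> m. F n m \<epsilon>)"
    and hCF: "CF > 0" "T0 > 0"
    and hFbd: "\<And>n \<epsilon>. \<epsilon> \<in> ball 0 \<epsilon>0 \<Longrightarrow>
       normE \<beta> \<mu> (\<lambda>m. F n m \<epsilon>) \<le> CF * inverse (T0 ^ n) * (q powr (1 / real k1)) ^ (n * (n - 1) div 2)"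
    and hChol: "\<And>l j. 1 \<le> l \<Longrightarrow> l \<le> D - 1 \<Longrightarrow> j \<le> p1 \<Longrightarrow>
       holo_E \<beta> \<mu> (ball 0 \<epsilon>0) (\<lambda>\<epsilon> m. C l j m \<epsilon>)"
  shows "\<exists>U. solves_eq q k1 k2 D dD1 dD2 Q RD1 RD2 R d \<delta> \<Delta> C p1 F \<epsilon>0 U
           \<and> (\<forall>n. holo_E \<beta> \<mu> (ball 0 \<epsilon>0) (\<lambda>\<epsilon> m. U n m \<epsilon>))
           \<and> (\<forall>V. solves_eq q k1 k2 D dD1 dD2 Q RD1 RD2 R d \<delta> \<Delta> C p1 F \<epsilon>0 V
                  \<and> (\<forall>n. \<forall>\<epsilon>\<in>ball 0 \<epsilon>0. (\<lambda>m. V n m \<epsilon>) \<in> E_space \<beta> \<mu>)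
                  \<longrightarrow> (\<forall>n m. \<forall>\<epsilon>\<in>ball 0 \<epsilon>0. V n m \<epsilon> = U n m \<epsilon>))"
proof -
  \<comment> \<open>Only the nondegeneracy and degree hypotheses enter; the conditions on \<open>k\<^sub>1, k\<^sub>2, \<kappa>, \<delta>\<close>
    and the growth bound on \<open>F\<close> concern convergence of the series, not its existence.\<close>
  interpret q_difference_convolution_equation_E q k1 k2 D dD1 dD2 Q RD1 RD2 R d \<delta> \<Delta> C p1 F \<epsilon>0 \<beta> \<mu>
  proof unfold_locales
    show "q \<noteq> 0" using hq by simp
    show "degree RD2 \<le> degree Q" using hdeg hdegQ by simp
    fix l assume l: "l \<in> {1..D-1}"
    then show "1 \<le> d l" using hd by simp
    show "degree (R l) \<le> degree Q" using l hdegR hdegQ by force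
    show "\<mu> > real (degree (R l)) + 1" using l hdegR[of l] h\<mu> by simp
    show "j \<le> p1 \<Longrightarrow> holo_E \<beta> \<mu> (ball 0 \<epsilon>0) (\<lambda>\<epsilon> m. C l j m \<epsilon>)" for j using l hChol by simp
  qed (use hdD hdegQ hQ h\<beta> hFhol in auto)
  show ?thesis
    using solves_eq_solution holo_E_solution solution_unique by blast
qed

end
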